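(* The set $\mathcal{Q}_0^\pi\subset\mathcal D$ belongs to $\mathcal F$, the Borel $\sigma$-algebra of $\mathcal D$ for the Skorokhod $J_1$ topology.
   Context: Let $\pi=(\pi_n)_{n\ge1}$ be a sequence of partitions $\pi_n=(t^n_0,\dots,t^n_{k_n})$ with $0=t^n_0<\dots<t^n_{k_n}<\infty$, $t^n_{k_n}\uparrow\infty$, and mesh tending to $0$ on compacts; sums over $i$ run over $0\le i<k_n$. $\mathcal D$ is the space of càdlàg functions $[0,\infty)\to\mathbb R$ with the Skorokhod $J_1$ topology (whose Borel $\sigma$-algebra coincides with the $\sigma$-algebra generated by the coordinate maps). $\Delta x(u)=x(u)-x(u-)$. $\mathcal{Q}_0^\pi$ is the set of $x\in\mathcal D$ such that the measures $\mu_n=\sum_i(x(t^n_{i+1})-x(t^n_i))^2\delta_{t^n_i}$ converge vaguely to a Radon measure $\mu$ on $[0,\infty)$ such that $t\mapsto\mu([0,t])-\sum_{u\le t}(\Delta x(u))^2$ is a continuous nondecreasing function. *)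

theory Defs
  imports "HOL-Analysis.Analysis"
begin

text \<open>Cadlag paths on [0,oo), represented as real functions vanishing on (-oo,0).\<close>
definition cadlag :: "(real \<Rightarrow> real) set" where
  "cadlag = {x. (\<forall>s<0. x s = 0)
              \<and> (\<forall>s\<ge>0. continuous (at_right s) x)
              \<and> (\<forall>s>0. \<exists>l. (x \<longlongrightarrow> l) (at_left s))}"

text \<open>Jump of x at u (with the convention x(0-) = x(0)).\<close>
definition jump :: "(real \<Rightarrow> real) \<Rightarrow> real \<Rightarrow> real" where
  "jump x u = (if u > 0 then x u - Lim (at_left u) x else 0)"

text \<open>Skorokhod J1 convergence of a sequence in D (Ethier--Kurtz, Prop. 3.5.3).\<close>
definition J1_conv :: "(nat \<Rightarrow> real \<Rightarrow> real) \<Rightarrow> (real \<Rightarrow> real) \<Rightarrow> bool" where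
  "J1_conv xs x \<longleftrightarrow>
     (\<exists>lam :: nat \<Rightarrow> real \<Rightarrow> real.
        (\<forall>n. strict_mono_on {0..} (lam n) \<and> continuous_on {0..} (lam n)
              \<and> lam n ` {0..} = {0..}) \<and>
        (\<forall>T>0. (\<lambda>n. SUP s\<in>{0..T}. \<bar>lam n s - s\<bar>) \<longlonglongrightarrow> 0 \<and>
                (\<lambda>n. SUP s\<in>{0..T}. \<bar>xs n (lam n s) - x s\<bar>) \<longlonglongrightarrow> 0))"

text \<open>Closed subsets of D for the J1 topology (metrizable, hence sequential).\<close>
definition J1_closed :: "(real \<Rightarrow> real) set \<Rightarrow> bool" where
  "J1_closed A \<longleftrightarrow> A \<subseteq> cadlag \<and>
     (\<forall>xs x. (\<forall>n. xs n \<in> A) \<longrightarrow> x \<in> cadlag \<longrightarrow> J1_conv xs x \<longrightarrow> x \<in> A)"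

definition skorokhod_borel :: "(real \<Rightarrow> real) set set" where
  "skorokhod_borel = sigma_sets cadlag {A. J1_closed A}"

text \<open>Sequence of partitions: pi_n = (t n 0, ..., t n (k n)).\<close>
definition partition_seq :: "(nat \<Rightarrow> nat \<Rightarrow> real) \<Rightarrow> (nat \<Rightarrow> nat) \<Rightarrow> bool" where
  "partition_seq t k \<longleftrightarrow>
     (\<forall>n. t n 0 = 0) \<and>
     (\<forall>n. \<forall>i<k n. t n i < t n (Suc i)) \<and>
     incseq (\<lambda>n. t n (k n)) \<and> filterlim (\<lambda>n. t n (k n)) at_top sequentially \<and>
     (\<forall>T>0. (\<lambda>n. Max ({t n (Suc i) - t n i | i. i < k n \<and> t n i \<le> T} \<union> {0}))
              \<longlonglongrightarrow> 0)"

definition Q0 :: "(nat \<Rightarrow> nat \<Rightarrow> real) \<Rightarrow> (nat \<Rightarrow> nat) \<Rightarrow> (real \<Rightarrow> real) set" where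
  "Q0 t k = {x \<in> cadlag. \<exists>\<mu> :: real measure.
      sets \<mu> = sets borel \<and> emeasure \<mu> {..<0} = 0 \<and>
      (\<forall>T. emeasure \<mu> {0..T} < \<infinity>) \<and>
      (\<forall>f :: real \<Rightarrow> real. continuous_on {0..} f \<and> (\<exists>T. \<forall>s\<ge>T. f s = 0) \<longrightarrow>
         (\<lambda>n. \<Sum>i<k n. (x (t n (Suc i)) - x (t n i))\<^sup>2 * f (t n i))
           \<longlonglongrightarrow> integral\<^sup>L \<mu> (\<lambda>s. f (max 0 s))) \<and>
      (\<forall>s\<ge>0. (\<lambda>u. (jump x u)\<^sup>2) summable_on {0..s}) \<and>
      continuous_on {0..} (\<lambda>s. measure \<mu> {0..s} - (\<Sum>\<^sub>\<infinity>u\<in>{0..s}. (jump x u)\<^sup>2)) \<and>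
      mono_on {0..} (\<lambda>s. measure \<mu> {0..s} - (\<Sum>\<^sub>\<infinity>u\<in>{0..s}. (jump x u)\<^sup>2))}"

end

theory Submission
  imports Defs "HOL-Probability.Distribution_Functions"
begin

text \<open>
  Membership in \<open>Q\<^sub>0\<^sup>\<pi>\<close> is equivalent to countably many conditions, each involving countably
  many coordinates \<open>x(s)\<close>, and every coordinate is \<open>\<F>\<close>-measurable because
  \<open>{x. x \<le> c on [a, b)}\<close> is \<open>J\<^sub>1\<close>-closed and \<open>x(s)\<close> is determined by \<open>x\<close> on right neighbourhoods of \<open>s\<close>.

  The conditions are: the quadratic sums tested against continuous ramps approximating the
  indicator of \<open>(-\<infinity>, q]\<close>, \<open>q\<close> rational, converge; and the function \<open>H\<close> built from these limits
  (which is \<open>s \<mapsto> \<mu>([0, s])\<close> whenever \<open>x \<in> Q\<^sub>0\<^sup>\<pi>\<close>) satisfies \<open>|H b - H a - (x b - x a)\<^sup>2|\<close> small for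
  rational \<open>a < b\<close> close together. Conversely, under these conditions the quadratic sums converge at
  every continuity point of \<open>H\<close>, hence vaguely to \<open>dH\<close>, and the second condition says exactly that
  the jumps of \<open>H\<close> are the squared jumps of \<open>x\<close>, i.e. that \<open>H\<close> minus the sum of squared jumps is
  continuous and nondecreasing.
\<close>

section \<open>Cadlag paths and measurability of the coordinates\<close>

lemma tendsto_imp_eventually_abs_le:
  fixes f :: "'a \<Rightarrow> real"
  assumes "(f \<longlongrightarrow> l) F"
  shows "\<forall>\<^sub>F v in F. \<bar>f v\<bar> \<le> \<bar>l\<bar> + 1"
  using tendstoD[OF assms zero_less_one] by eventually_elim (auto simp: dist_real_def)

lemma cadlag_has_left_limit:
  assumes "x \<in> cadlag"
  shows "\<exists>l. (x \<longlongrightarrow> l) (at_left s)"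
proof (cases "s > 0")
  case False
  have "\<forall>\<^sub>F v in at_left s. x v = 0"
    unfolding eventually_at_left_field using False assms
    by (intro exI[of _ "s - 1"]) (auto simp: cadlag_def)
  then show ?thesis by (blast intro: tendsto_eventually)
qed (use assms in \<open>auto simp: cadlag_def\<close>)

lemma cadlag_has_right_limit:
  assumes "x \<in> cadlag"
  shows "\<exists>l. (x \<longlongrightarrow> l) (at_right s)"
proof (cases "s \<ge> 0")
  case True
  then show ?thesis using assms by (auto simp: cadlag_def continuous_within)
next
  case False
  have "\<forall>\<^sub>F v in at_right s. x v = 0"
    unfolding eventually_at_right_field using False assms
    by (intro exI[of _ 0]) (auto simp: cadlag_def)
  then show ?thesis by (blast intro: tendsto_eventually)
qed

lemma cadlag_locally_bounded:
  assumes x: "x \<in> cadlag"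
  shows "\<exists>d>0. \<exists>B. \<forall>v\<in>ball s d. \<bar>x v\<bar> \<le> B"
proof -
  obtain l r where l: "(x \<longlongrightarrow> l) (at_left s)" and r: "(x \<longlongrightarrow> r) (at_right s)"
    using cadlag_has_left_limit[OF x] cadlag_has_right_limit[OF x] by blast
  define M where "M = max (\<bar>l\<bar> + 1) (\<bar>r\<bar> + 1)"
  have "\<forall>\<^sub>F v in at_left s. \<bar>x v\<bar> \<le> M" "\<forall>\<^sub>F v in at_right s. \<bar>x v\<bar> \<le> M"
    using tendsto_imp_eventually_abs_le[OF l] tendsto_imp_eventually_abs_le[OF r]
    by (auto elim!: eventually_mono simp: M_def)
  then have "\<forall>\<^sub>F v in at s. \<bar>x v\<bar> \<le> M"
    unfolding eventually_at_split by blast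
  then obtain d where d: "d > 0" "\<And>v. v \<noteq> s \<Longrightarrow> dist v s < d \<Longrightarrow> \<bar>x v\<bar> \<le> M"
    unfolding eventually_at by auto
  have "\<bar>x v\<bar> \<le> max M \<bar>x s\<bar>" if "v \<in> ball s d" for v
    using d(2)[of v] that by (cases "v = s") (auto simp: dist_commute)
  with d(1) show ?thesis by blast
qed

lemma cadlag_bounded_atMost:
  assumes x: "x \<in> cadlag"
  shows "\<exists>B. \<forall>v\<le>T. \<bar>x v\<bar> \<le> B"
proof -
  obtain d B where dB: "\<And>s. d s > 0" "\<And>s v. v \<in> ball s (d s) \<Longrightarrow> \<bar>x v\<bar> \<le> B s"
    using cadlag_locally_bounded[OF x] by metis
  have "compact {0..T}" by simp
  moreover have "{0..T} \<subseteq> (\<Union>s\<in>{0..T}. ball s (d s))" using dB(1) by force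
  ultimately obtain C where C: "C \<subseteq> {0..T}" "finite C" "{0..T} \<subseteq> (\<Union>s\<in>C. ball s (d s))"
    by (elim compactE_image) auto
  have "\<bar>x v\<bar> \<le> (\<Sum>s\<in>C. \<bar>B s\<bar>)" if "v \<le> T" for v
  proof (cases "v < 0")
    case True then show ?thesis using x by (simp add: cadlag_def sum_nonneg)
  next
    case False
    then have "v \<in> {0..T}" using that by simp
    then obtain s where s: "s \<in> C" "v \<in> ball s (d s)" using C(3) by blast
    have "\<bar>x v\<bar> \<le> \<bar>B s\<bar>" using dB(2)[OF s(2)] by simp
    also have "\<dots> \<le> (\<Sum>s\<in>C. \<bar>B s\<bar>)" using s(1) C(2) by (intro member_le_sum) auto
    finally show ?thesis .
  qed
  then show ?thesis by blast
qed

lemma cadlag_tendsto_left_Lim: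
  assumes "x \<in> cadlag"
  shows "(x \<longlongrightarrow> Lim (at_left u) x) (at_left u)"
  using cadlag_has_left_limit[OF assms] tendsto_Lim trivial_limit_at_left_real by metis

lemma tendsto_zero_if_SUP_tendsto_zero:
  fixes f :: "nat \<Rightarrow> 'a \<Rightarrow> real"
  assumes "(\<lambda>n. SUP s\<in>S. \<bar>f n s\<bar>) \<longlonglongrightarrow> 0" and "u \<in> S"
    and "\<And>n. bdd_above ((\<lambda>s. \<bar>f n s\<bar>) ` S)"
  shows "(\<lambda>n. f n u) \<longlonglongrightarrow> 0"
  by (rule Lim_null_comparison[OF _ assms(1)]) (auto intro!: always_eventually cSUP_upper assms)

lemma J1_conv_pointwise:
  assumes J: "J1_conv xs x" and xs: "\<And>n. xs n \<in> cadlag" and x: "x \<in> cadlag"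
  obtains lam where "\<And>u. u \<ge> 0 \<Longrightarrow> (\<lambda>n. lam n u) \<longlonglongrightarrow> u"
    and "\<And>u. u \<ge> 0 \<Longrightarrow> (\<lambda>n. xs n (lam n u)) \<longlonglongrightarrow> x u"
proof -
  obtain lam where cont: "\<And>n. continuous_on {0..} (lam n)"
    and c1: "\<And>T. T > 0 \<Longrightarrow> (\<lambda>n. SUP s\<in>{0..T}. \<bar>lam n s - s\<bar>) \<longlonglongrightarrow> 0"
    and c2: "\<And>T. T > 0 \<Longrightarrow> (\<lambda>n. SUP s\<in>{0..T}. \<bar>xs n (lam n s) - x s\<bar>) \<longlonglongrightarrow> 0"
    using J unfolding J1_conv_def by blast
  have bdd_lam: "bdd_above (f ` {0..T})" if "continuous_on {0..T} f" for f :: "real \<Rightarrow> real" and T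
    using that by (intro bounded_imp_bdd_above compact_imp_bounded compact_continuous_image) auto
  have cont_T: "continuous_on {0..T} (lam n)" for n T
    by (rule continuous_on_subset[OF cont]) auto
  show ?thesis
  proof (rule that)
    fix u :: real assume u: "u \<ge> 0"
    have "(\<lambda>n. lam n u - u) \<longlonglongrightarrow> 0"
      by (rule tendsto_zero_if_SUP_tendsto_zero[OF c1[of "u + 1"]])
         (use u in \<open>auto intro!: bdd_lam continuous_intros cont_T\<close>)
    then show "(\<lambda>n. lam n u) \<longlonglongrightarrow> u" by (rule LIM_zero_cancel)
    have "bdd_above ((\<lambda>s. \<bar>xs n (lam n s) - x s\<bar>) ` {0..u + 1})" for n
    proof -
      obtain M where M: "\<And>s. s \<in> {0..u + 1} \<Longrightarrow> lam n s \<le> M"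
        using bdd_lam[OF cont_T] unfolding bdd_above_def by blast
      obtain B1 where B1: "\<And>v. v \<le> M \<Longrightarrow> \<bar>xs n v\<bar> \<le> B1"
        using cadlag_bounded_atMost[OF xs] by blast
      obtain B2 where B2: "\<And>v. v \<le> u + 1 \<Longrightarrow> \<bar>x v\<bar> \<le> B2"
        using cadlag_bounded_atMost[OF x] by blast
      have "\<bar>xs n (lam n s) - x s\<bar> \<le> B1 + B2" if "s \<in> {0..u + 1}" for s
        using B1[OF M[OF that]] B2[of s] that by auto
      then show ?thesis by (rule bdd_aboveI2)
    qed
    then have "(\<lambda>n. xs n (lam n u) - x u) \<longlonglongrightarrow> 0"
      by (intro tendsto_zero_if_SUP_tendsto_zero[OF c2[of "u + 1"]]) (use u in auto)
    then show "(\<lambda>n. xs n (lam n u)) \<longlonglongrightarrow> x u" by (rule LIM_zero_cancel)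
  qed
qed

definition cadlag_le_on :: "real \<Rightarrow> real \<Rightarrow> real \<Rightarrow> (real \<Rightarrow> real) set" where
  "cadlag_le_on a b c = {x\<in>cadlag. \<forall>u\<in>{a..<b}. x u \<le> c}"

lemma J1_closed_cadlag_le_on:
  assumes ab: "0 \<le> a" "a < b"
  shows "J1_closed (cadlag_le_on a b c)"
  unfolding J1_closed_def
proof (intro conjI allI impI)
  show "cadlag_le_on a b c \<subseteq> cadlag" by (auto simp: cadlag_le_on_def)
  fix xs x assume xs_le: "\<forall>n. xs n \<in> cadlag_le_on a b c" and x: "x \<in> cadlag" and J: "J1_conv xs x"
  have xs: "xs n \<in> cadlag" for n using xs_le by (auto simp: cadlag_le_on_def)
  obtain lam where lam: "\<And>u. u \<ge> 0 \<Longrightarrow> (\<lambda>n. lam n u) \<longlonglongrightarrow> u"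
    and xs_lam: "\<And>u. u \<ge> 0 \<Longrightarrow> (\<lambda>n. xs n (lam n u)) \<longlonglongrightarrow> x u"
    using J1_conv_pointwise[OF J xs x] by metis
  have interior: "x u \<le> c" if u: "a < u" "u < b" for u
  proof -
    have "\<forall>\<^sub>F n in sequentially. lam n u \<in> {a<..<b}"
      using lam[of u] u ab by (intro topological_tendstoD) auto
    then have "\<forall>\<^sub>F n in sequentially. xs n (lam n u) \<le> c"
      by eventually_elim (use xs_le in \<open>auto simp: cadlag_le_on_def\<close>)
    then show ?thesis using xs_lam[of u] u ab by (intro tendsto_upperbound) auto
  qed
  have "(x \<longlongrightarrow> x a) (at_right a)" using x ab by (auto simp: cadlag_def continuous_within)
  moreover have "\<forall>\<^sub>F v in at_right a. x v \<le> c"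
    unfolding eventually_at_right_field using ab interior by (intro exI[of _ b]) auto
  ultimately have "x a \<le> c" by (intro tendsto_upperbound[of x _ "at_right a"]) auto
  then have "x u \<le> c" if "u \<in> {a..<b}" for u
    using interior that by (cases "u = a") auto
  then show "x \<in> cadlag_le_on a b c" using x by (simp add: cadlag_le_on_def)
qed

definition skorokhod_space :: "(real \<Rightarrow> real) measure" where
  "skorokhod_space = sigma cadlag {A. J1_closed A}"

lemma J1_closed_subset_Pow: "{A. J1_closed A} \<subseteq> Pow cadlag"
  by (auto simp: J1_closed_def)

lemma sets_skorokhod_space: "sets skorokhod_space = skorokhod_borel"
  unfolding skorokhod_space_def skorokhod_borel_def
  using J1_closed_subset_Pow by (rule sets_measure_of)

lemma space_skorokhod_space: "space skorokhod_space = cadlag"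
  unfolding skorokhod_space_def using J1_closed_subset_Pow by (rule space_measure_of)

lemma cadlag_le_on_in_sets: "0 \<le> a \<Longrightarrow> a < b \<Longrightarrow> cadlag_le_on a b c \<in> sets skorokhod_space"
  unfolding sets_skorokhod_space skorokhod_borel_def
  by (rule sigma_sets.Basic) (simp add: J1_closed_cadlag_le_on)

lemma cadlag_coord_le_eq:
  assumes s: "s \<ge> 0"
  shows "{x\<in>cadlag. x s \<le> c} = (\<Inter>j. \<Union>m. cadlag_le_on s (s + 1 / Suc m) (c + 1 / Suc j))"
proof (intro equalityI subsetI)
  fix x assume "x \<in> {x\<in>cadlag. x s \<le> c}"
  then have x: "x \<in> cadlag" "x s \<le> c" by auto
  have "\<exists>m. x \<in> cadlag_le_on s (s + 1 / Suc m) (c + 1 / Suc j)" for j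
  proof -
    have "(x \<longlongrightarrow> x s) (at_right s)" using x s by (auto simp: cadlag_def continuous_within)
    then have "\<forall>\<^sub>F v in at_right s. x v < x s + 1 / Suc j" by (rule order_tendstoD) simp
    then obtain b where b: "b > s" "\<And>v. s < v \<Longrightarrow> v < b \<Longrightarrow> x v < x s + 1 / Suc j"
      by (auto simp: eventually_at_right_field)
    have "b - s > 0" using b(1) by simp
    then obtain m where m: "1 / real (Suc m) < b - s" by (rule nat_approx_posE)
    have "x u \<le> c + 1 / Suc j" if "u \<in> {s..<s + 1 / Suc m}" for u
      using b(2)[of u] m that x(2) by (cases "u = s") (auto simp: add_increasing2)
    then have "x \<in> cadlag_le_on s (s + 1 / Suc m) (c + 1 / Suc j)"
      using x(1) by (simp add: cadlag_le_on_def)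
    then show ?thesis ..
  qed
  then show "x \<in> (\<Inter>j. \<Union>m. cadlag_le_on s (s + 1 / Suc m) (c + 1 / Suc j))" by blast
next
  fix x assume "x \<in> (\<Inter>j. \<Union>m. cadlag_le_on s (s + 1 / Suc m) (c + 1 / Suc j))"
  then have x_in: "\<And>j. \<exists>m. x \<in> cadlag_le_on s (s + 1 / Suc m) (c + 1 / Suc j)" by blast
  then have x: "x \<in> cadlag" by (auto simp: cadlag_le_on_def)
  have le: "x s \<le> c + 1 / Suc j" for j
    using x_in[of j] by (auto simp: cadlag_le_on_def)
  have "x s \<le> c"
  proof (rule field_le_epsilon)
    fix e :: real assume "0 < e"
    then obtain j where "1 / real (Suc j) < e" by (rule nat_approx_posE)
    then show "x s \<le> c + e" using le[of j] by linarith
  qed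
  then show "x \<in> {x\<in>cadlag. x s \<le> c}" using x by simp
qed

lemma measurable_coord [measurable]: "(\<lambda>x. x s) \<in> borel_measurable skorokhod_space"
proof (cases "s \<ge> 0")
  case True
  show ?thesis unfolding borel_measurable_iff_le space_skorokhod_space
  proof
    fix c
    have "(\<Inter>j. \<Union>m. cadlag_le_on s (s + 1 / Suc m) (c + 1 / Suc j)) \<in> sets skorokhod_space"
      using True by (intro sets.countable_INT sets.countable_UN image_subsetI cadlag_le_on_in_sets) auto
    then show "{x \<in> cadlag. x s \<le> c} \<in> sets skorokhod_space"
      using cadlag_coord_le_eq[OF True] by simp
  qed
next
  case False
  then have "\<And>x. x \<in> space skorokhod_space \<Longrightarrow> x s = 0"
    by (auto simp: space_skorokhod_space cadlag_def)
  then show ?thesis by (subst measurable_cong[where g = "\<lambda>_. 0"]) auto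
qed

section \<open>Left limits and jumps of monotone functions\<close>

definition left_lim :: "(real \<Rightarrow> real) \<Rightarrow> real \<Rightarrow> real" where
  "left_lim H u = Sup (H ` {..<u})"

lemma bdd_above_image_lessThan_mono: "mono H \<Longrightarrow> bdd_above (H ` {..<u})"
  by (rule bdd_aboveI2[of _ _ "H u"]) (auto intro: monoD)

lemma le_left_lim: "mono H \<Longrightarrow> v < u \<Longrightarrow> H v \<le> left_lim H u"
  unfolding left_lim_def by (rule cSUP_upper[OF _ bdd_above_image_lessThan_mono]) auto

lemma tendsto_left_lim:
  assumes H: "mono H"
  shows "(H \<longlongrightarrow> left_lim H u) (at_left u)"
proof (rule order_tendstoI)
  fix a assume "a < left_lim H u"
  then obtain v where v: "v < u" "a < H v"
    unfolding left_lim_def using less_cSUP_iff[OF _ bdd_above_image_lessThan_mono[OF H]] by auto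
  show "\<forall>\<^sub>F w in at_left u. a < H w"
    unfolding eventually_at_left_field using v
    by (intro exI[of _ v]) (auto intro: less_le_trans[OF _ monoD[OF H]])
next
  fix a assume a: "left_lim H u < a"
  show "\<forall>\<^sub>F w in at_left u. H w < a"
    unfolding eventually_at_left_field
    by (intro exI[of _ "u - 1"]) (use le_left_lim[OF H] a in \<open>auto intro: le_less_trans\<close>)
qed

lemma right_cont_if_mono:
  fixes F :: "real \<Rightarrow> real"
  assumes F: "mono F" and above: "\<And>e. F s < e \<Longrightarrow> \<exists>b>s. F b < e"
  shows "continuous (at_right s) F"
  unfolding continuous_within
proof (rule order_tendstoI)
  fix e assume "e < F s"
  then have "e < F v" if "s < v" for v using monoD[OF F, of s v] that by simp
  then show "\<forall>\<^sub>F v in at_right s. e < F v" by (auto simp: eventually_at_right_field intro: gt_ex)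
next
  fix e assume "F s < e"
  then obtain b where b: "s < b" "F b < e" using above by blast
  then have "F v < e" if "v < b" for v using monoD[OF F, of v b] that by simp
  then show "\<forall>\<^sub>F v in at_right s. F v < e" unfolding eventually_at_right_field using b(1) by blast
qed

lemma Rats_greaterThan_nonempty: "{q\<in>\<rat>. (s::real) < q} \<noteq> {}"
  using Rats_dense_in_real[of s "s + 1"] by auto

lemma INF_Rats_greaterThan_eq:
  fixes F :: "real \<Rightarrow> real"
  assumes F: "mono F" "continuous (at_right s) F"
  shows "(INF q\<in>{q\<in>\<rat>. s < q}. F q) = F s"
proof (rule antisym)
  have bdd: "bdd_below (F ` {q\<in>\<rat>. s < q})"
    by (rule bdd_belowI2[of _ "F s"]) (auto intro: monoD[OF F(1)])
  show "(INF q\<in>{q\<in>\<rat>. s < q}. F q) \<le> F s"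
  proof (rule field_le_epsilon)
    fix e :: real assume "e > 0"
    then have "\<forall>\<^sub>F v in at_right s. F v < F s + e"
      using F(2) by (intro order_tendstoD) (auto simp: continuous_within)
    then obtain b where "s < b" "\<And>v. s < v \<Longrightarrow> v < b \<Longrightarrow> F v < F s + e"
      by (auto simp: eventually_at_right_field)
    moreover obtain q where "q \<in> \<rat>" "s < q" "q < b" using Rats_dense_in_real[OF \<open>s < b\<close>] by blast
    ultimately have "F q < F s + e" by simp
    moreover have "(INF q\<in>{q\<in>\<rat>. s < q}. F q) \<le> F q"
      using \<open>q \<in> \<rat>\<close> \<open>s < q\<close> by (intro cINF_lower[OF bdd]) simp
    ultimately show "(INF q\<in>{q\<in>\<rat>. s < q}. F q) \<le> F s + e" by simp
  qed
  show "F s \<le> (INF q\<in>{q\<in>\<rat>. s < q}. F q)"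
    using Rats_greaterThan_nonempty by (intro cINF_greatest) (auto intro: monoD[OF F(1)])
qed

lemma sum_jumps_le:
  assumes H: "mono H" and U: "finite U" "U \<subseteq> {a<..<c}" and "a < c"
  shows "(\<Sum>u\<in>U. H u - left_lim H u) \<le> left_lim H c - H a"
  using U assms(4)
proof (induction U arbitrary: c rule: finite_linorder_max_induct)
  case empty
  then show ?case using le_left_lim[OF H] by simp
next
  case (insert u U)
  have "(\<Sum>v\<in>insert u U. H v - left_lim H v) = H u - left_lim H u + (\<Sum>v\<in>U. H v - left_lim H v)"
    using insert.hyps by (auto intro: sum.insert)
  also have "\<dots> \<le> H u - left_lim H u + (left_lim H u - H a)"
    using insert by (intro add_left_mono insert.IH) auto
  also have "\<dots> \<le> left_lim H c - H a"
    using insert.prems le_left_lim[OF H, of u c] by auto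
  finally show ?case .
qed

lemma infsum_atLeastAtMost_split:
  fixes g :: "real \<Rightarrow> real"
  assumes "0 \<le> s" "s \<le> s'" "g summable_on {0..s'}"
  shows "infsum g {0..s'} = infsum g {0..s} + infsum g {s<..s'}"
proof -
  have "{0..s'} = {0..s} \<union> {s<..s'}" using assms by auto
  then show ?thesis
    by (simp, intro infsum_Un_disjoint summable_on_subset_banach[OF assms(3)]) (use assms in auto)
qed

lemma infsum_greaterThanAtMost_eq:
  fixes g :: "real \<Rightarrow> real"
  assumes "v < s" "g summable_on {v<..s}"
  shows "infsum g {v<..s} = g s + infsum g {v<..<s}"
proof -
  have "{v<..s} = insert s {v<..<s}" using assms by auto
  then show ?thesis
    by (simp, intro infsum_insert summable_on_subset_banach[OF assms(2)]) auto
qed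

lemma tendsto_infsum_greaterThanLessThan_at_left:
  fixes g :: "real \<Rightarrow> real"
  assumes g0: "\<And>u. g u \<ge> 0" and sg: "g summable_on {0..u}" and u: "u > 0"
  shows "((\<lambda>v. infsum g {v<..<u}) \<longlongrightarrow> 0) (at_left u)"
proof (rule order_tendstoI)
  fix e :: real assume "e < 0"
  then show "\<forall>\<^sub>F v in at_left u. e < infsum g {v<..<u}"
    using g0 by (auto intro!: always_eventually less_le_trans[OF _ infsum_nonneg])
next
  fix e :: real assume e: "0 < e"
  obtain F where F: "finite F" "F \<subseteq> {0..u}" "dist (sum g F) (infsum g {0..u}) \<le> e / 2"
    using infsum_finite_approximation[OF sg, of "e / 2"] e by auto
  define v0 where "v0 = Max (insert 0 (F \<inter> {..<u}))"
  have v0: "0 \<le> v0" "v0 < u" using F(1) u by (auto simp: v0_def)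
  have "infsum g {v<..<u} < e" if v: "v0 < v" "v < u" for v
  proof -
    have "w \<le> v0" if "w \<in> F" "w < u" for w
      using that F(1) by (simp add: v0_def)
    then have disj: "F \<inter> {v<..<u} = {}" using v by force
    have sub: "F \<union> {v<..<u} \<subseteq> {0..u}" using v v0 F(2) by auto
    have "sum g F + infsum g {v<..<u} = infsum g (F \<union> {v<..<u})"
      using F(1) disj sub
      by (simp add: infsum_Un_disjoint summable_on_subset_banach[OF sg])
    also have "\<dots> \<le> infsum g {0..u}"
      by (rule infsum_mono_neutral[OF summable_on_subset_banach[OF sg sub] sg]) (use sub g0 in auto)
    finally show ?thesis using F(3) e unfolding dist_real_def abs_le_iff by linarith
  qed
  then show "\<forall>\<^sub>F v in at_left u. infsum g {v<..<u} < e"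
    unfolding eventually_at_left_field using v0 by blast
qed

lemma jump_eq_if_remainder_continuous:
  fixes H g :: "real \<Rightarrow> real"
  assumes H: "mono H" and g0: "\<And>u. g u \<ge> 0" and summ: "\<And>s. s \<ge> 0 \<Longrightarrow> g summable_on {0..s}"
    and cont: "continuous_on {0..} (\<lambda>s. H s - infsum g {0..s})" and u: "u > 0"
  shows "H u - left_lim H u = g u"
proof -
  define D where "D s = H s - infsum g {0..s}" for s
  have "isCont D u"
    unfolding D_def using continuous_on_interior[OF cont] u by (simp add: interior_Ici[of 0])
  then have lim_D: "((\<lambda>v. D u - D v) \<longlongrightarrow> D u - D u) (at_left u)"
    by (intro tendsto_intros) (simp add: isCont_def filterlim_at_split)
  have "\<forall>\<^sub>F v in at_left u. D u - D v = H u - H v - g u - infsum g {v<..<u}"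
    unfolding eventually_at_left_field
  proof (intro exI[of _ 0] conjI allI impI)
    fix v assume v: "0 < v" "v < u"
    have "g summable_on {v<..u}" by (rule summable_on_subset_banach[OF summ[of u]]) (use v in auto)
    then show "D u - D v = H u - H v - g u - infsum g {v<..<u}"
      using infsum_atLeastAtMost_split[of v u g] infsum_greaterThanAtMost_eq[of v u g] summ[of u] v
      by (simp add: D_def)
  qed (rule u)
  moreover have "((\<lambda>v. H u - H v - g u - infsum g {v<..<u}) \<longlongrightarrow> H u - left_lim H u - g u - 0) (at_left u)"
    by (intro tendsto_intros tendsto_left_lim[OF H]
        tendsto_infsum_greaterThanLessThan_at_left[OF g0 summ u]) (use u in auto)
  ultimately have "((\<lambda>v. D u - D v) \<longlongrightarrow> H u - left_lim H u - g u) (at_left u)"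
    by (simp add: tendsto_cong)
  from tendsto_unique[OF _ this lim_D] show ?thesis by simp
qed

locale jump_function =
  fixes H g :: "real \<Rightarrow> real"
  assumes H_mono: "mono H" and H_right_cont: "\<And>a. continuous (at_right a) H"
    and g_nonneg: "\<And>u. g u \<ge> 0" and g_zero: "\<And>u. u \<le> 0 \<Longrightarrow> g u = 0"
    and jump: "\<And>u. u > 0 \<Longrightarrow> H u - left_lim H u = g u"
begin

definition remainder :: "real \<Rightarrow> real" where
  "remainder s = H s - infsum g {0..s}"

lemma sum_le_left_lim:
  assumes "finite F" "F \<subseteq> {a<..<c}" "0 \<le> a" "a < c"
  shows "sum g F \<le> left_lim H c - H a"
proof -
  have "sum g F = (\<Sum>u\<in>F. H u - left_lim H u)" using assms jump by (intro sum.cong) auto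
  also have "\<dots> \<le> left_lim H c - H a" by (rule sum_jumps_le[OF H_mono assms(1,2,4)])
  finally show ?thesis .
qed

lemma summable:
  assumes "s \<ge> 0" shows "g summable_on {0..s}"
proof (rule nonneg_bdd_above_summable_on[OF g_nonneg bdd_aboveI2])
  fix F assume F: "F \<in> {F. F \<subseteq> {0..s} \<and> finite F}"
  have "sum g F = sum g (F - {0})"
    using F g_zero by (intro sum.mono_neutral_right) auto
  also have "\<dots> \<le> left_lim H (s + 1) - H 0" using F assms by (intro sum_le_left_lim) auto
  finally show "sum g F \<le> left_lim H (s + 1) - H 0" .
qed

lemma summable_subset: "A \<subseteq> {0..s} \<Longrightarrow> s \<ge> 0 \<Longrightarrow> g summable_on A"
  by (rule summable_on_subset_banach[OF summable])

lemma infsum_greaterThanLessThan_le: "0 \<le> v \<Longrightarrow> v < s \<Longrightarrow> infsum g {v<..<s} \<le> left_lim H s - H v"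
  by (rule infsum_le_finite_sums[OF summable_subset[of _ s]]) (auto intro: sum_le_left_lim)

lemma remainder_right_increment:
  assumes "0 \<le> s" "s < s'"
  shows "remainder s \<le> remainder s'" "remainder s' \<le> remainder s + (H s' - H s)"
proof -
  have "infsum g {s<..s'} = g s' + infsum g {s<..<s'}"
    using assms by (intro infsum_greaterThanAtMost_eq summable_subset[of _ s']) auto
  moreover have "infsum g {0..s'} = infsum g {0..s} + infsum g {s<..s'}"
    using assms by (intro infsum_atLeastAtMost_split summable) auto
  moreover have "0 \<le> infsum g {s<..s'}" using g_nonneg by (intro infsum_nonneg) auto
  ultimately show "remainder s \<le> remainder s'" "remainder s' \<le> remainder s + (H s' - H s)"
    using infsum_greaterThanLessThan_le[of s s'] jump[of s'] assms by (auto simp: remainder_def)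
qed

lemma remainder_left_increment:
  assumes "0 \<le> v" "v < s"
  shows "remainder v \<le> remainder s" "remainder s - (left_lim H s - H v) \<le> remainder v"
proof -
  have "infsum g {v<..s} = g s + infsum g {v<..<s}"
    using assms by (intro infsum_greaterThanAtMost_eq summable_subset[of _ s]) auto
  moreover have "infsum g {0..s} = infsum g {0..v} + infsum g {v<..s}"
    using assms by (intro infsum_atLeastAtMost_split summable) auto
  moreover have "0 \<le> infsum g {v<..<s}" using g_nonneg by (intro infsum_nonneg) auto
  ultimately show "remainder v \<le> remainder s" "remainder s - (left_lim H s - H v) \<le> remainder v"
    using infsum_greaterThanLessThan_le[OF assms] jump[of s] assms by (auto simp: remainder_def)
qed

lemma mono_on_remainder: "mono_on {0..} remainder"
  using remainder_right_increment(1) by (intro mono_onI) (fastforce simp: le_less)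

lemma continuous_on_remainder: "continuous_on {0..} remainder"
proof -
  have right: "(remainder \<longlongrightarrow> remainder s) (at_right s)" if "s \<ge> 0" for s
  proof (rule tendsto_sandwich)
    show "\<forall>\<^sub>F s' in at_right s. remainder s \<le> remainder s'"
      "\<forall>\<^sub>F s' in at_right s. remainder s' \<le> remainder s + (H s' - H s)"
      using remainder_right_increment that unfolding eventually_at_right_field by (auto intro!: exI[of _ "s + 1"])
    have "(H \<longlongrightarrow> H s) (at_right s)" using H_right_cont[of s] by (simp add: continuous_within)
    then show "((\<lambda>s'. remainder s + (H s' - H s)) \<longlongrightarrow> remainder s) (at_right s)"
      by (auto intro!: tendsto_eq_intros)
  qed simp
  have left: "(remainder \<longlongrightarrow> remainder s) (at_left s)" if "s > 0" for s
  proof (rule tendsto_sandwich)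
    show "\<forall>\<^sub>F v in at_left s. remainder s - (left_lim H s - H v) \<le> remainder v"
      "\<forall>\<^sub>F v in at_left s. remainder v \<le> remainder s"
      using remainder_left_increment that unfolding eventually_at_left_field by (auto intro!: exI[of _ 0])
    show "((\<lambda>v. remainder s - (left_lim H s - H v)) \<longlongrightarrow> remainder s) (at_left s)"
      by (auto intro!: tendsto_eq_intros tendsto_left_lim[OF H_mono])
  qed simp
  have "(remainder \<longlongrightarrow> remainder s) (at s within {0..})" if "s \<ge> 0" for s
  proof (cases "s = 0")
    case True
    then show ?thesis using right[of 0] by (simp add: at_within_Ici_at_right)
  next
    case False
    then have "at s within {0..} = at s" using that by (intro at_within_open_subset[of _ "{0<..}"]) auto
    then show ?thesis using left[of s] right[of s] that False by (simp add: filterlim_at_split)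
  qed
  then show ?thesis unfolding continuous_on_def by simp
qed

end

section \<open>Squared increments of a cadlag path near a point\<close>

lemma abs_increment_square_diff_le:
  fixes p q xa xb P Q Ha Hb \<rho> :: real
  assumes "\<bar>xa - p\<bar> \<le> \<rho>" "\<bar>xb - q\<bar> \<le> \<rho>" "\<bar>Ha - P\<bar> \<le> \<rho>" "\<bar>Hb - Q\<bar> \<le> \<rho>" "\<rho> \<le> 1"
  shows "\<bar>(Hb - Ha - (xb - xa)\<^sup>2) - (Q - P - (q - p)\<^sup>2)\<bar> \<le> \<rho> * (6 + 4 * \<bar>q - p\<bar>)"
proof -
  define d e where "d = q - p" and "e = (xb - xa) - (q - p)"
  have e: "\<bar>e\<bar> \<le> 2 * \<rho>" using assms(1,2) unfolding e_def abs_le_iff by linarith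
  have "(d + e)\<^sup>2 - d\<^sup>2 = e * (2 * d + e)" by (simp add: power2_eq_square algebra_simps)
  then have "\<bar>(d + e)\<^sup>2 - d\<^sup>2\<bar> = \<bar>e\<bar> * \<bar>2 * d + e\<bar>" by (simp add: abs_mult)
  also have "\<dots> \<le> (2 * \<rho>) * (2 * \<bar>d\<bar> + 2)"
    using e assms(5) by (intro mult_mono) (auto simp: abs_le_iff)
  finally have "\<bar>(d + e)\<^sup>2 - d\<^sup>2\<bar> \<le> \<rho> * (4 * \<bar>d\<bar> + 4)" by (simp add: algebra_simps)
  moreover have "xb - xa = d + e" by (simp add: d_def e_def)
  ultimately show ?thesis
    using assms(3,4) unfolding d_def[symmetric] abs_le_iff by (simp add: algebra_simps)
qed

lemma cadlag_right_neighbourhood: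
  assumes x: "x \<in> cadlag" and rc: "continuous (at_right u) H" and u: "u \<ge> 0" and \<rho>: "\<rho> > 0"
  obtains b where "u < b" "\<And>v. u \<le> v \<Longrightarrow> v < b \<Longrightarrow> \<bar>x v - x u\<bar> \<le> \<rho> \<and> \<bar>H v - H u\<bar> \<le> \<rho>"
proof -
  have "(x \<longlongrightarrow> x u) (at_right u)" using x u by (auto simp: cadlag_def continuous_within)
  moreover have "(H \<longlongrightarrow> H u) (at_right u)" using rc by (simp add: continuous_within)
  ultimately have "\<forall>\<^sub>F v in at_right u. dist (x v) (x u) < \<rho> \<and> dist (H v) (H u) < \<rho>"
    using \<rho> by (intro eventually_conj tendstoD)
  then obtain b where b: "u < b" "\<And>v. u < v \<Longrightarrow> v < b \<Longrightarrow> dist (x v) (x u) < \<rho> \<and> dist (H v) (H u) < \<rho>"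
    unfolding eventually_at_right_field by blast
  have "\<bar>x v - x u\<bar> \<le> \<rho> \<and> \<bar>H v - H u\<bar> \<le> \<rho>" if "u \<le> v" "v < b" for v
    using b(2)[of v] that \<rho> by (cases "v = u") (auto simp: dist_real_def)
  with b(1) show ?thesis by (rule that)
qed

lemma cadlag_left_neighbourhood:
  assumes x: "x \<in> cadlag" and H: "mono H" and \<rho>: "\<rho> > 0"
  obtains c where "c < u"
    "\<And>v. c < v \<Longrightarrow> v < u \<Longrightarrow> \<bar>x v - Lim (at_left u) x\<bar> \<le> \<rho> \<and> \<bar>H v - left_lim H u\<bar> \<le> \<rho>"
proof -
  have "\<forall>\<^sub>F v in at_left u. dist (x v) (Lim (at_left u) x) < \<rho> \<and> dist (H v) (left_lim H u) < \<rho>"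
    using \<rho> by (intro eventually_conj tendstoD cadlag_tendsto_left_Lim[OF x] tendsto_left_lim[OF H])
  then obtain c where "c < u"
    "\<And>v. c < v \<Longrightarrow> v < u \<Longrightarrow> dist (x v) (Lim (at_left u) x) < \<rho> \<and> dist (H v) (left_lim H u) < \<rho>"
    unfolding eventually_at_left_field by blast
  then show ?thesis by (intro that[of c]) (auto simp: dist_real_def less_imp_le)
qed

lemma local_increment_estimate:
  assumes x: "x \<in> cadlag" and H: "mono H" and rc: "\<And>a. continuous (at_right a) H"
    and u: "u \<ge> 0" and eta: "\<eta> > 0"
  shows "\<exists>\<delta>>0. \<forall>a b. 0 < a \<longrightarrow> a < b \<longrightarrow> a \<in> ball u \<delta> \<longrightarrow> b \<in> ball u \<delta> \<longrightarrow>
     \<bar>H b - H a - (x b - x a)\<^sup>2 - (if a < u \<and> u \<le> b then H u - left_lim H u - (jump x u)\<^sup>2 else 0)\<bar> < \<eta>"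
proof -
  define xl where "xl = Lim (at_left u) x"
  define \<rho> where "\<rho> = min 1 (\<eta> / (7 + 4 * \<bar>x u - xl\<bar>))"
  have "\<rho> * (7 + 4 * \<bar>x u - xl\<bar>) \<le> \<eta>"
    unfolding \<rho>_def using eta by (intro order_trans[OF mult_right_mono[OF min.cobounded2]]) auto
  moreover have "\<rho> > 0" "\<rho> \<le> 1" using eta by (simp_all add: \<rho>_def add_pos_nonneg)
  moreover have "\<rho> * (7 + 4 * \<bar>x u - xl\<bar>) = \<rho> * (6 + 4 * \<bar>x u - xl\<bar>) + \<rho>"
    "6 * \<rho> \<le> \<rho> * (6 + 4 * \<bar>x u - xl\<bar>)"
    using \<open>\<rho> > 0\<close> by (simp_all add: algebra_simps)
  ultimately have \<rho>: "\<rho> > 0" "\<rho> \<le> 1" "\<rho> * (6 + 4 * \<bar>x u - xl\<bar>) < \<eta>" "6 * \<rho> < \<eta>"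
    by linarith+
  obtain b1 where b1: "u < b1" and right: "\<And>v. u \<le> v \<Longrightarrow> v < b1 \<Longrightarrow> \<bar>x v - x u\<bar> \<le> \<rho> \<and> \<bar>H v - H u\<bar> \<le> \<rho>"
    using cadlag_right_neighbourhood[OF x rc u \<rho>(1)] by blast
  obtain c1 where c1: "c1 < u"
    "\<And>v. c1 < v \<Longrightarrow> v < u \<Longrightarrow> \<bar>x v - xl\<bar> \<le> \<rho> \<and> \<bar>H v - left_lim H u\<bar> \<le> \<rho>"
    using cadlag_left_neighbourhood[OF x H \<rho>(1)] unfolding xl_def by blast
  show ?thesis
  proof (intro exI[of _ "min (b1 - u) (u - c1)"] conjI allI impI)
    show "min (b1 - u) (u - c1) > 0" using b1 c1 by simp
    fix a b :: real
    assume "0 < a" "a < b" "a \<in> ball u (min (b1 - u) (u - c1))" "b \<in> ball u (min (b1 - u) (u - c1))"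
    then have ab: "0 < a" "a < b" "c1 < a" "b < b1" by (auto simp: dist_real_def)
    consider "b < u" | "u \<le> a" | "a < u" "u \<le> b" by linarith
    then show "\<bar>H b - H a - (x b - x a)\<^sup>2 - (if a < u \<and> u \<le> b then H u - left_lim H u - (jump x u)\<^sup>2 else 0)\<bar> < \<eta>"
    proof cases
      case 1
      have "\<bar>(H b - H a - (x b - x a)\<^sup>2) - (left_lim H u - left_lim H u - (xl - xl)\<^sup>2)\<bar> \<le> \<rho> * (6 + 4 * \<bar>xl - xl\<bar>)"
        using c1(2)[of a] c1(2)[of b] ab 1 \<rho>(2) by (intro abs_increment_square_diff_le) auto
      then show ?thesis using 1 \<rho>(4) by simp
    next
      case 2
      have "\<bar>(H b - H a - (x b - x a)\<^sup>2) - (H u - H u - (x u - x u)\<^sup>2)\<bar> \<le> \<rho> * (6 + 4 * \<bar>x u - x u\<bar>)"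
        using right[of a] right[of b] ab 2 \<rho>(2) by (intro abs_increment_square_diff_le) auto
      then show ?thesis using 2 \<rho>(4) by simp
    next
      case 3
      have "\<bar>(H b - H a - (x b - x a)\<^sup>2) - (H u - left_lim H u - (x u - xl)\<^sup>2)\<bar> \<le> \<rho> * (6 + 4 * \<bar>x u - xl\<bar>)"
        using c1(2)[of a] right[of b] ab 3 \<rho>(2) by (intro abs_increment_square_diff_le) auto
      moreover have "jump x u = x u - xl" using 3 ab by (simp add: jump_def xl_def)
      ultimately show ?thesis using 3 \<rho>(3) by simp
    qed
  qed
qed

text \<open>
  Equivalent to \<open>H u - H(u-) = (\<Delta>x(u))\<^sup>2\<close> for all \<open>u > 0\<close>, but only evaluates \<open>H\<close> and \<open>x\<close>
  at rational points, which makes it measurable in \<open>x\<close>.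
\<close>

definition square_increments_match :: "(real \<Rightarrow> real) \<Rightarrow> (real \<Rightarrow> real) \<Rightarrow> bool" where
  "square_increments_match H x \<longleftrightarrow> (\<forall>N::nat. \<forall>j::nat. \<exists>m::nat. \<forall>a\<in>\<rat>. \<forall>b\<in>\<rat>.
      0 < a \<longrightarrow> a < b \<longrightarrow> b \<le> real N \<longrightarrow> b - a < 1 / real (Suc m) \<longrightarrow>
      \<bar>H b - H a - (x b - x a)\<^sup>2\<bar> < 1 / real (Suc j))"

lemma square_increments_match_if_jump_eq:
  assumes x: "x \<in> cadlag" and H: "mono H" and rc: "\<And>a. continuous (at_right a) H"
    and jump: "\<And>u. u > 0 \<Longrightarrow> H u - left_lim H u = (jump x u)\<^sup>2"
  shows "square_increments_match H x"
  unfolding square_increments_match_def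
proof (intro allI)
  fix N j :: nat
  have "\<exists>d>0. \<forall>a b. 0 < a \<longrightarrow> a < b \<longrightarrow> a \<in> ball u d \<longrightarrow> b \<in> ball u d \<longrightarrow>
      \<bar>H b - H a - (x b - x a)\<^sup>2\<bar> < 1 / real (Suc j)" if "u \<ge> 0" for u
  proof -
    obtain \<delta> where \<delta>: "\<delta> > 0" "\<And>a b. 0 < a \<Longrightarrow> a < b \<Longrightarrow> a \<in> ball u \<delta> \<Longrightarrow> b \<in> ball u \<delta> \<Longrightarrow>
        \<bar>H b - H a - (x b - x a)\<^sup>2 - (if a < u \<and> u \<le> b then H u - left_lim H u - (jump x u)\<^sup>2 else 0)\<bar>
          < 1 / real (Suc j)"
      using local_increment_estimate[OF x H rc \<open>u \<ge> 0\<close>, of "1 / real (Suc j)"] by auto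
    have "\<bar>H b - H a - (x b - x a)\<^sup>2\<bar> < 1 / real (Suc j)"
      if "0 < a" "a < b" "a \<in> ball u \<delta>" "b \<in> ball u \<delta>" for a b
      using \<delta>(2)[OF that] jump[of u] that by (auto split: if_splits)
    with \<delta>(1) show ?thesis by blast
  qed
  then obtain d where d: "\<And>u. u \<ge> 0 \<Longrightarrow> d u > 0"
    "\<And>u a b. u \<ge> 0 \<Longrightarrow> 0 < a \<Longrightarrow> a < b \<Longrightarrow> a \<in> ball u (d u) \<Longrightarrow> b \<in> ball u (d u) \<Longrightarrow>
      \<bar>H b - H a - (x b - x a)\<^sup>2\<bar> < 1 / real (Suc j)"
    by metis
  obtain \<epsilon> where \<epsilon>: "\<epsilon> > 0" "\<And>y. y \<in> {0..real N} \<Longrightarrow> \<exists>G\<in>(\<lambda>u. ball u (d u)) ` {0..real N}. ball y \<epsilon> \<subseteq> G"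
  proof (rule Heine_Borel_lemma[of "{0..real N}" "(\<lambda>u. ball u (d u)) ` {0..real N}"])
    show "{0..real N} \<subseteq> \<Union> ((\<lambda>u. ball u (d u)) ` {0..real N})" using d(1) by force
  qed auto
  obtain m where m: "1 / real (Suc m) < \<epsilon>" using nat_approx_posE[OF \<epsilon>(1)] by blast
  have "\<bar>H b - H a - (x b - x a)\<^sup>2\<bar> < 1 / real (Suc j)"
    if ab: "0 < a" "a < b" "b \<le> real N" "b - a < 1 / real (Suc m)" for a b
  proof -
    obtain u where u: "u \<in> {0..real N}" "ball a \<epsilon> \<subseteq> ball u (d u)" using \<epsilon>(2)[of a] ab by auto
    have "a \<in> ball a \<epsilon>" "b \<in> ball a \<epsilon>" using \<epsilon>(1) ab m by (auto simp: dist_real_def)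
    then have "a \<in> ball u (d u)" "b \<in> ball u (d u)" using u(2) by blast+
    then show ?thesis using d(2)[of u a b] u ab by auto
  qed
  then show "\<exists>m. \<forall>a\<in>\<rat>. \<forall>b\<in>\<rat>. 0 < a \<longrightarrow> a < b \<longrightarrow> b \<le> real N \<longrightarrow> b - a < 1 / real (Suc m) \<longrightarrow>
      \<bar>H b - H a - (x b - x a)\<^sup>2\<bar> < 1 / real (Suc j)"
    by blast
qed

lemma jump_eq_if_square_increments_match:
  assumes x: "x \<in> cadlag" and H: "mono H" and rc: "\<And>a. continuous (at_right a) H"
    and JC: "square_increments_match H x" and u: "u > 0"
  shows "H u - left_lim H u = (jump x u)\<^sup>2"
proof (rule ccontr)
  assume ne: "H u - left_lim H u \<noteq> (jump x u)\<^sup>2"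
  define \<psi> where "\<psi> = H u - left_lim H u - (jump x u)\<^sup>2"
  define \<eta> where "\<eta> = \<bar>\<psi>\<bar> / 2"
  have eta: "\<eta> > 0" using ne by (simp add: \<eta>_def \<psi>_def)
  obtain j where j: "1 / real (Suc j) < \<eta>" using nat_approx_posE[OF eta] by blast
  obtain N :: nat where N: "u < real N" using reals_Archimedean2 by blast
  obtain m where m: "\<forall>a\<in>\<rat>. \<forall>b\<in>\<rat>. 0 < a \<longrightarrow> a < b \<longrightarrow> b \<le> real N \<longrightarrow>
      b - a < 1 / real (Suc m) \<longrightarrow> \<bar>H b - H a - (x b - x a)\<^sup>2\<bar> < 1 / real (Suc j)"
    using JC unfolding square_increments_match_def by blast
  obtain \<delta> where \<delta>: "\<delta> > 0" "\<And>a b. 0 < a \<Longrightarrow> a < b \<Longrightarrow> a \<in> ball u \<delta> \<Longrightarrow> b \<in> ball u \<delta> \<Longrightarrow>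
   \<bar>H b - H a - (x b - x a)\<^sup>2 - (if a < u \<and> u \<le> b then H u - left_lim H u - (jump x u)\<^sup>2 else 0)\<bar> < \<eta>"
    using local_increment_estimate[OF x H rc less_imp_le[OF u] eta] by blast
  define r where "r = min \<delta> (1 / (2 * real (Suc m)))"
  have r3: "r \<le> 1 / (2 * real (Suc m))" by (simp add: r_def)
  have "2 * (1 / (2 * real (Suc m))) = 1 / real (Suc m)" by (simp add: field_simps)
  then have r: "r > 0" "r \<le> \<delta>" "2 * r \<le> 1 / real (Suc m)" using r3 by (auto simp: r_def \<delta>(1))
  obtain a where a: "a \<in> \<rat>" "max 0 (u - r) < a" "a < u"
    using Rats_dense_in_real[of "max 0 (u - r)" u] u r by auto
  obtain b where b: "b \<in> \<rat>" "u < b" "b < min (u + r) (real N)"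
    using Rats_dense_in_real[of u "min (u + r) (real N)"] N r by auto
  have ab: "0 < a" "a < b" "b \<le> real N" "b - a < 1 / real (Suc m)" using a b r by auto
  have "\<bar>H b - H a - (x b - x a)\<^sup>2\<bar> < 1 / real (Suc j)" using m a(1) b(1) ab by blast
  moreover have "\<bar>H b - H a - (x b - x a)\<^sup>2 - \<psi>\<bar> < \<eta>"
  proof -
    have "a \<in> ball u \<delta>" "b \<in> ball u \<delta>" using a b r by (auto simp: dist_real_def)
    then show ?thesis using \<delta>(2)[of a b] ab a(3) b(2) unfolding \<psi>_def by simp
  qed
  ultimately have "\<bar>\<psi>\<bar> < 2 * \<eta>" using j unfolding abs_less_iff by linarith
  then show False by (simp add: \<eta>_def)
qed

section \<open>Vague convergence from convergence of distribution functions\<close>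

lemma tendsto_if_approximable:
  fixes f :: "nat \<Rightarrow> real"
  assumes "\<And>e. e > 0 \<Longrightarrow> \<exists>g L. g \<longlonglongrightarrow> L \<and> \<bar>L - l\<bar> \<le> e \<and> (\<forall>\<^sub>F n in sequentially. \<bar>f n - g n\<bar> \<le> e)"
  shows "f \<longlonglongrightarrow> l"
proof (rule tendstoI)
  fix r :: real assume r: "r > 0"
  then obtain g L where g: "g \<longlonglongrightarrow> L" "\<bar>L - l\<bar> \<le> r / 4" "\<forall>\<^sub>F n in sequentially. \<bar>f n - g n\<bar> \<le> r / 4"
    using assms[of "r / 4"] by auto
  have "\<forall>\<^sub>F n in sequentially. dist (g n) L < r / 4" using tendstoD[OF g(1), of "r / 4"] r by simp
  with g(3) show "\<forall>\<^sub>F n in sequentially. dist (f n) l < r"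
    by eventually_elim (use g(2) in \<open>simp add: dist_real_def, smt (verit)\<close>)
qed

lemma indicator_Ioc_eq_diff:
  fixes p q t :: real
  shows "p \<le> q \<Longrightarrow> (indicator {p<..q} t :: real) = indicator {..q} t - indicator {..p} t"
  by (auto simp: indicator_def)

lemma strict_mono_interval_cover:
  fixes p :: "nat \<Rightarrow> real"
  assumes p: "strict_mono p" and s: "p 0 < s" "s \<le> p K"
  shows "\<exists>j<K. s \<in> {p j<..p (Suc j)}"
  using s
proof (induction K)
  case (Suc K)
  then show ?case by (cases "s \<le> p K") (auto intro: less_SucI)
qed simp

lemma step_function_eq:
  fixes p c :: "nat \<Rightarrow> real"
  assumes p: "strict_mono p" and j: "j < K" "s \<in> {p j<..p (Suc j)}"
  shows "(\<Sum>l<K. c l * indicator {p l<..p (Suc l)} s) = c j"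
proof -
  have "s \<notin> {p l<..p (Suc l)}" if "l \<noteq> j" for l
  proof (cases "l < j")
    case True
    then have "p (Suc l) \<le> p j" using p by (simp add: strict_mono_less_eq)
    then show ?thesis using j by auto
  next
    case False
    then have "p (Suc j) \<le> p l" using p that by (simp add: strict_mono_less_eq)
    then show ?thesis using j by auto
  qed
  then show ?thesis using j by (subst sum.remove[of _ j]) auto
qed

lemma step_function_eq_0:
  fixes p c :: "nat \<Rightarrow> real"
  assumes p: "strict_mono p" and s: "s \<le> p 0 \<or> p K < s"
  shows "(\<Sum>l<K. c l * indicator {p l<..p (Suc l)} s) = 0"
proof (intro sum.neutral ballI)
  fix l assume "l \<in> {..<K}"
  then have "p 0 \<le> p l" "p (Suc l) \<le> p K" using p by (auto simp: strict_mono_less_eq)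
  then show "c l * indicator {p l<..p (Suc l)} s = 0" using s by auto
qed

lemma step_function_approx:
  fixes p :: "nat \<Rightarrow> real" and F :: "real \<Rightarrow> real"
  assumes p: "strict_mono p" "p 0 < 0" and T: "T \<le> p K"
    and F_zero: "\<And>s. s \<ge> T \<Longrightarrow> F s = 0" and F_const: "\<And>s. s \<le> 0 \<Longrightarrow> F s = F 0"
    and close: "\<And>j s. j < K \<Longrightarrow> s \<in> {p j<..p (Suc j)} \<Longrightarrow> \<bar>F s - F (p j)\<bar> \<le> \<epsilon>" and "\<epsilon> \<ge> 0"
  shows "\<bar>F s - (\<Sum>j<K. F (p j) * indicator {p j<..p (Suc j)} s)\<bar>
    \<le> \<epsilon> * indicator {..p K} s + \<bar>F 0\<bar> * indicator {..p 0} s"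
proof -
  have "p 0 \<le> p K" using p(1) by (simp add: strict_mono_less_eq)
  consider "s \<le> p 0" | "p 0 < s" "s \<le> p K" | "p K < s" by linarith
  then show ?thesis
  proof cases
    case 1
    then show ?thesis
      using step_function_eq_0[OF p(1)] F_const[of s] p(2) \<open>p 0 \<le> p K\<close> \<open>\<epsilon> \<ge> 0\<close> by simp
  next
    case 2
    then obtain j where "j < K" "s \<in> {p j<..p (Suc j)}" using strict_mono_interval_cover[OF p(1)] by blast
    then show ?thesis using 2 close step_function_eq[OF p(1)] by simp
  next
    case 3
    then show ?thesis using step_function_eq_0[OF p(1)] F_zero[of s] T \<open>p 0 \<le> p K\<close> by simp
  qed
qed

locale distribution_function =
  fixes H :: "real \<Rightarrow> real"
  assumes H_mono: "mono H" and H_right_cont: "\<And>a. continuous (at_right a) H"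
    and H_neg: "\<And>s. s < 0 \<Longrightarrow> H s = 0"
begin

abbreviation "\<mu> \<equiv> interval_measure H"

lemma H_le: "x \<le> y \<Longrightarrow> H x \<le> H y"
  by (rule monoD[OF H_mono])

lemma H_nonneg: "H s \<ge> 0"
  using H_le[of "min s (-1)" s] H_neg[of "min s (-1)"] by simp

lemma emeasure_mu_atMost: "emeasure \<mu> {..s} = H s"
proof (rule emeasure_interval_measure_Iic)
  show "(H \<longlongrightarrow> 0) at_bot"
    by (rule tendsto_eventually) (use H_neg in \<open>auto simp: eventually_at_bot_dense\<close>)
qed (use H_le H_right_cont in auto)

lemma measure_mu_atMost: "measure \<mu> {..s} = H s"
  by (simp add: measure_def emeasure_mu_atMost H_nonneg)

lemma measure_mu_Ioc: "a \<le> b \<Longrightarrow> measure \<mu> {a<..b} = H b - H a"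
  by (rule measure_interval_measure_Ioc) (use H_le H_right_cont in auto)

lemma emeasure_mu_Ioc_finite: "emeasure \<mu> {a<..b} < top"
  by (cases "a \<le> b") (simp_all add: emeasure_interval_measure_Ioc H_le H_right_cont)

lemma emeasure_mu_lessThan_0: "emeasure \<mu> {..<0} = 0"
proof -
  have "{..<(0::real)} = (\<Union>n. {..- 1 / real (Suc n)})"
  proof (intro equalityI subsetI)
    fix s :: real assume "s \<in> {..<0}"
    then obtain n where "1 / real (Suc n) < - s" using nat_approx_posE[of "- s"] by auto
    then have "s \<in> {..- 1 / real (Suc n)}" by simp
    then show "s \<in> (\<Union>n. {..- 1 / real (Suc n)})" by blast
  qed (auto simp: le_less_trans[OF _ neg_less_0_iff_less[THEN iffD2]])
  also have "emeasure \<mu> \<dots> = 0"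
    by (rule emeasure_UN_eq_0) (auto simp: emeasure_mu_atMost H_neg)
  finally show ?thesis .
qed

lemma emeasure_mu_Icc_0:
  assumes "s \<ge> 0" shows "emeasure \<mu> {0..s} = H s"
proof -
  have "{..<0} \<union> {0..s} = {..s}" "{..<0} \<inter> {0..s} = {}" using assms by auto
  then show ?thesis
    using plus_emeasure[of "{..<0}" \<mu> "{0..s}"] emeasure_mu_lessThan_0 emeasure_mu_atMost[of s] by auto
qed

lemma measure_mu_Icc_0: "s \<ge> 0 \<Longrightarrow> measure \<mu> {0..s} = H s"
  by (simp add: measure_def emeasure_mu_Icc_0 H_nonneg)

lemma emeasure_mu_Icc_finite: "emeasure \<mu> {0..T} < \<infinity>"
  by (cases "T \<ge> 0") (simp_all add: emeasure_mu_Icc_0)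

lemma integral_step_function:
  fixes p c :: "nat \<Rightarrow> real"
  assumes p: "mono p"
  shows "integral\<^sup>L \<mu> (\<lambda>s. \<Sum>j<J. c j * indicator {p j<..p (Suc j)} s) = (\<Sum>j<J. c j * (H (p (Suc j)) - H (p j)))"
proof -
  have int: "integrable \<mu> (\<lambda>s. c j * indicator {p j<..p (Suc j)} s)" for j
    by (intro integrable_mult_right integrable_real_indicator) (auto simp: emeasure_mu_Ioc_finite)
  have "integral\<^sup>L \<mu> (\<lambda>s. \<Sum>j<J. c j * indicator {p j<..p (Suc j)} s)
      = (\<Sum>j<J. integral\<^sup>L \<mu> (\<lambda>s. c j * indicator {p j<..p (Suc j)} s))"
    by (rule Bochner_Integration.integral_sum[OF int])
  also have "\<dots> = (\<Sum>j<J. c j * (H (p (Suc j)) - H (p j)))"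
    using p by (simp add: measure_mu_Ioc monoD)
  finally show ?thesis .
qed

lemma exists_isCont_between:
  assumes "a < b" shows "\<exists>c\<in>{a<..<b}. isCont H c"
proof (rule ccontr)
  assume "\<not> ?thesis"
  then have "{a<..<b} \<subseteq> {c. \<not> isCont H c}" by auto
  moreover have "countable {c. \<not> isCont H c}" by (rule mono_ctble_discont[OF H_mono])
  ultimately have "countable {a<..<b}" by (rule countable_subset)
  then show False using assms uncountable_open_interval by blast
qed

lemma continuity_point_partition:
  assumes h: "h > 0" and T: "T \<ge> 0"
  obtains p :: "nat \<Rightarrow> real" and K where "strict_mono p" "- h < p 0" "p 0 < 0"
    "\<And>j. j > 0 \<Longrightarrow> isCont H (p j) \<and> p j > 0" "\<And>j. p (Suc j) - p j < h" "T \<le> p K" "p K \<le> T + h"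
proof -
  define g where "g = h / 2"
  have g: "g > 0" using h by (simp add: g_def)
  have "\<exists>c\<in>{(real j + 1/2) * g<..<(real j + 1) * g}. isCont H c" for j
    using g by (intro exists_isCont_between) (simp add: algebra_simps)
  then obtain q where q: "\<And>j. (real j + 1/2) * g < q j \<and> q j < (real j + 1) * g \<and> isCont H (q j)"
    by (metis greaterThanLessThan_iff)
  define p where "p j = (if j = 0 then - g / 2 else q (j - 1))" for j
  have p_Suc: "p (Suc j) = q j" for j by (simp add: p_def)
  have p_bounds: "real j * g - g / 2 \<le> p j \<and> p j \<le> real j * g" for j
  proof (cases j)
    case (Suc i)
    then show ?thesis using q[of i] by (simp add: p_def algebra_simps)
  qed (use g in \<open>simp add: p_def\<close>)
  define K where "K = nat \<lceil>T / g\<rceil> + 1"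
  have "T / g \<le> real_of_int \<lceil>T / g\<rceil>" "real_of_int \<lceil>T / g\<rceil> < T / g + 1" "0 \<le> T / g"
    using T g by (linarith, linarith, simp)
  then have K: "T / g + 1 \<le> real K" "real K \<le> T / g + 2" by (simp_all add: K_def)
  show ?thesis
  proof (rule that[of p K])
    show "strict_mono p"
    proof (rule strict_mono_Suc_iff[THEN iffD2], intro allI)
      fix j
      have "p j < (real j + 1/2) * g" using p_bounds[of j] g by (simp add: algebra_simps)
      then show "p j < p (Suc j)" using q[of j] p_Suc[of j] by simp
    qed
    show "- h < p 0" "p 0 < 0" using g by (simp_all add: p_def g_def)
    show "isCont H (p j) \<and> p j > 0" if "j > 0" for j
    proof -
      obtain i where "j = Suc i" using \<open>j > 0\<close> gr0_implies_Suc by blast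
      moreover have "0 < (real i + 1/2) * g" using g by simp
      ultimately show ?thesis using q[of i] p_Suc[of i] by simp
    qed
    show "p (Suc j) - p j < h" for j
      using p_bounds[of j] p_bounds[of "Suc j"] g by (simp add: g_def algebra_simps)
    have "(T / g + 1) * g \<le> real K * g" "real K * g \<le> (T / g + 2) * g"
      using K g by (simp_all add: mult_right_mono)
    then show "T \<le> p K" "p K \<le> T + h"
      using p_bounds[of K] g by (simp_all add: g_def algebra_simps)
  qed
qed

lemma tendsto_weighted_sum_step_function:
  fixes a T :: "nat \<Rightarrow> nat \<Rightarrow> real" and K :: "nat \<Rightarrow> nat" and p c :: "nat \<Rightarrow> real"
  assumes T0: "\<And>n i. i < K n \<Longrightarrow> T n i \<ge> 0"
    and conv: "\<And>s. s > 0 \<Longrightarrow> isCont H s \<Longrightarrow> (\<lambda>n. \<Sum>i<K n. a n i * indicator {..s} (T n i)) \<longlonglongrightarrow> H s"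
    and p: "mono p" "p 0 < 0" "\<And>j. j > 0 \<Longrightarrow> isCont H (p j) \<and> p j > 0"
  shows "(\<lambda>n. \<Sum>i<K n. a n i * (\<Sum>j<J. c j * indicator {p j<..p (Suc j)} (T n i)))
    \<longlonglongrightarrow> (\<Sum>j<J. c j * (H (p (Suc j)) - H (p j)))"
proof -
  define G where "G n s = (\<Sum>i<K n. a n i * indicator {..s} (T n i))" for n s
  have G_conv: "(\<lambda>n. G n (p j)) \<longlonglongrightarrow> H (p j)" for j
  proof (cases "j = 0")
    case True
    have "indicator {..p 0} (T n i) = (0::real)" if "i < K n" for n i
      using T0[OF that] p(2) by simp
    then have "G n (p j) = 0" for n
      using True by (simp add: G_def)
    then show ?thesis using True H_neg[OF p(2)] by simp
  qed (use p(3) conv in \<open>simp add: G_def\<close>)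
  have "(\<Sum>i<K n. a n i * (\<Sum>j<J. c j * indicator {p j<..p (Suc j)} (T n i)))
      = (\<Sum>j<J. c j * (G n (p (Suc j)) - G n (p j)))" for n
  proof -
    have "(\<Sum>i<K n. a n i * (\<Sum>j<J. c j * indicator {p j<..p (Suc j)} (T n i)))
        = (\<Sum>i<K n. \<Sum>j<J. c j * (a n i * indicator {p j<..p (Suc j)} (T n i)))"
      unfolding sum_distrib_left by (simp only: mult.left_commute)
    also have "\<dots> = (\<Sum>j<J. \<Sum>i<K n. c j * (a n i * indicator {p j<..p (Suc j)} (T n i)))"
      by (rule sum.swap)
    also have "\<dots> = (\<Sum>j<J. c j * (\<Sum>i<K n. a n i * indicator {p j<..p (Suc j)} (T n i)))"
      unfolding sum_distrib_left ..
    also have "\<dots> = (\<Sum>j<J. c j * (G n (p (Suc j)) - G n (p j)))"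
      using p(1) by (simp add: G_def indicator_Ioc_eq_diff monoD right_diff_distrib sum_subtractf)
    finally show ?thesis .
  qed
  then show ?thesis by (simp only:) (intro tendsto_intros G_conv)
qed

end

lemma abs_weighted_sum_diff_le:
  fixes a T :: "nat \<Rightarrow> real" and F \<phi> :: "real \<Rightarrow> real"
  assumes "\<And>i. a i \<ge> 0" and "\<And>i. i < K \<Longrightarrow> \<bar>F (T i) - \<phi> (T i)\<bar> \<le> \<epsilon> * indicator {..c} (T i)"
  shows "\<bar>(\<Sum>i<K. a i * F (T i)) - (\<Sum>i<K. a i * \<phi> (T i))\<bar> \<le> \<epsilon> * (\<Sum>i<K. a i * indicator {..c} (T i))"
proof -
  have "\<bar>(\<Sum>i<K. a i * F (T i)) - (\<Sum>i<K. a i * \<phi> (T i))\<bar> = \<bar>\<Sum>i<K. a i * (F (T i) - \<phi> (T i))\<bar>"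
    by (simp add: sum_subtractf right_diff_distrib)
  also have "\<dots> \<le> (\<Sum>i<K. \<bar>a i * (F (T i) - \<phi> (T i))\<bar>)" by (rule sum_abs)
  also have "\<dots> \<le> (\<Sum>i<K. a i * (\<epsilon> * indicator {..c} (T i)))"
    using assms by (intro sum_mono) (simp add: abs_mult mult_left_mono)
  finally show ?thesis unfolding sum_distrib_left by (simp only: mult.left_commute)
qed

context distribution_function
begin

lemma integrable_eventually_zero:
  fixes F :: "real \<Rightarrow> real"
  assumes F_cont: "continuous_on UNIV F" and T: "T \<ge> 0"
    and F_zero: "\<And>s. s \<ge> T \<Longrightarrow> F s = 0" and F_const: "\<And>s. s \<le> 0 \<Longrightarrow> F s = F 0"
  shows "integrable \<mu> F"
proof -
  have "bounded (F ` {0..T})"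
    by (rule compact_imp_bounded[OF compact_continuous_image[OF continuous_on_subset[OF F_cont]]]) auto
  then obtain B where "\<And>y. y \<in> F ` {0..T} \<Longrightarrow> norm y \<le> B"
    by (auto simp: bounded_iff)
  then have B: "\<bar>F s\<bar> \<le> B * indicator {..T} s" for s
    using F_zero F_const[of s] T by (cases "s < 0"; cases "s \<le> T") auto
  show ?thesis
  proof (rule Bochner_Integration.integrable_bound)
    show "integrable \<mu> (\<lambda>s. B * indicator {..T} s :: real)"
      by (intro integrable_mult_right integrable_real_indicator) (auto simp: emeasure_mu_atMost)
    show "AE s in \<mu>. norm (F s) \<le> norm (B * indicator {..T} s :: real)"
      using B by (intro AE_I2) (auto intro: order_trans[OF _ abs_ge_self])
    show "F \<in> borel_measurable \<mu>"
      by (subst measurable_cong_sets[OF sets_interval_measure refl]) (rule borel_measurable_continuous_onI[OF F_cont])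
  qed
qed

lemma abs_integral_diff_le:
  fixes F \<phi> :: "real \<Rightarrow> real"
  assumes "integrable \<mu> F" "integrable \<mu> \<phi>" and "d < 0"
    and approx: "\<And>s. \<bar>F s - \<phi> s\<bar> \<le> \<epsilon> * indicator {..c} s + C * indicator {..d} s"
  shows "\<bar>integral\<^sup>L \<mu> \<phi> - integral\<^sup>L \<mu> F\<bar> \<le> \<epsilon> * H c"
proof -
  have bound_int: "integrable \<mu> (\<lambda>s. \<epsilon> * indicator {..c} s + C * indicator {..d} s)"
    by (intro Bochner_Integration.integrable_add integrable_mult_right integrable_real_indicator)
       (auto simp: emeasure_mu_atMost)
  have "\<bar>integral\<^sup>L \<mu> \<phi> - integral\<^sup>L \<mu> F\<bar> = \<bar>integral\<^sup>L \<mu> (\<lambda>s. F s - \<phi> s)\<bar>"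
    using assms(1,2) by simp
  also have "\<dots> \<le> integral\<^sup>L \<mu> (\<lambda>s. \<epsilon> * indicator {..c} s + C * indicator {..d} s)"
    by (rule integral_abs_bound_integral[OF Bochner_Integration.integrable_diff[OF assms(1,2)] bound_int approx])
  also have "\<dots> = \<epsilon> * H c"
    using H_neg[OF \<open>d < 0\<close>] by (simp add: Bochner_Integration.integral_add emeasure_mu_atMost measure_mu_atMost)
  finally show ?thesis .
qed

lemma fine_continuity_point_partition:
  fixes F :: "real \<Rightarrow> real"
  assumes F_cont: "continuous_on UNIV F" and T: "T \<ge> 0" and \<epsilon>: "\<epsilon> > 0"
  obtains p :: "nat \<Rightarrow> real" and J where "strict_mono p" "p 0 < 0" "\<And>j. j > 0 \<Longrightarrow> isCont H (p j) \<and> p j > 0"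
    "T \<le> p J" "p J \<le> T + 1" "\<And>j s. j < J \<Longrightarrow> s \<in> {p j<..p (Suc j)} \<Longrightarrow> \<bar>F s - F (p j)\<bar> \<le> \<epsilon>"
proof -
  have "uniformly_continuous_on {-1..T + 1} F"
    by (rule compact_uniformly_continuous[OF continuous_on_subset[OF F_cont]]) auto
  then obtain \<delta> where \<delta>: "\<delta> > 0"
    "\<And>s s'. s \<in> {-1..T + 1} \<Longrightarrow> s' \<in> {-1..T + 1} \<Longrightarrow> dist s' s < \<delta> \<Longrightarrow> dist (F s') (F s) < \<epsilon>"
    unfolding uniformly_continuous_on_def using \<epsilon> by metis
  obtain p J where p: "strict_mono p" "- min \<delta> 1 < p 0" "p 0 < 0"
    "\<And>j. j > 0 \<Longrightarrow> isCont H (p j) \<and> p j > 0" "\<And>j. p (Suc j) - p j < min \<delta> 1"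
    "T \<le> p J" "p J \<le> T + min \<delta> 1"
    using continuity_point_partition[of "min \<delta> 1" T] \<delta>(1) T by auto
  have p_mono: "i \<le> j \<Longrightarrow> p i \<le> p j" for i j using p(1) by (simp add: strict_mono_less_eq)
  show ?thesis
  proof (rule that[OF p(1,3,4,6)])
    show "p J \<le> T + 1" using p(7) by linarith
    fix j s assume j: "j < J" "s \<in> {p j<..p (Suc j)}"
    have "p (Suc j) - p j < \<delta>" "p (Suc j) \<le> p J" "p 0 \<le> p j"
      using p(5)[of j] j(1) p_mono[of 0 j] p_mono[of "Suc j" J] by auto
    then have "s \<in> {-1..T + 1}" "p j \<in> {-1..T + 1}" "dist s (p j) < \<delta>"
      using j(2) p(2,7) by (auto simp: dist_real_def)
    then show "\<bar>F s - F (p j)\<bar> \<le> \<epsilon>" using \<delta>(2)[of "p j" s] by (simp add: dist_real_def)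
  qed
qed

text \<open>Approximate \<open>F\<close> uniformly by a step function whose jumps are continuity points of \<open>H\<close>.\<close>

lemma weighted_sum_approximable:
  fixes a T :: "nat \<Rightarrow> nat \<Rightarrow> real" and K :: "nat \<Rightarrow> nat" and F :: "real \<Rightarrow> real"
  assumes a0: "\<And>n i. a n i \<ge> 0" and T0: "\<And>n i. i < K n \<Longrightarrow> T n i \<ge> 0"
    and conv: "\<And>s. s > 0 \<Longrightarrow> isCont H s \<Longrightarrow> (\<lambda>n. \<Sum>i<K n. a n i * indicator {..s} (T n i)) \<longlonglongrightarrow> H s"
    and F_cont: "continuous_on UNIV F" and T1: "T1 \<ge> 0"
    and F_zero: "\<And>s. s \<ge> T1 \<Longrightarrow> F s = 0" and F_const: "\<And>s. s \<le> 0 \<Longrightarrow> F s = F 0"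
    and e: "e > 0"
  shows "\<exists>g L. g \<longlonglongrightarrow> L \<and> \<bar>L - integral\<^sup>L \<mu> F\<bar> \<le> e \<and>
    (\<forall>\<^sub>F n in sequentially. \<bar>(\<Sum>i<K n. a n i * F (T n i)) - g n\<bar> \<le> e)"
proof -
  define \<epsilon> where "\<epsilon> = e / (H (T1 + 1) + 1)"
  have \<epsilon>: "\<epsilon> > 0" "\<epsilon> * (H (T1 + 1) + 1) = e"
    using e H_nonneg[of "T1 + 1"] by (auto simp: \<epsilon>_def add_pos_nonneg)
  obtain p J where p: "strict_mono p" "p 0 < 0" "\<And>j. j > 0 \<Longrightarrow> isCont H (p j) \<and> p j > 0"
    "T1 \<le> p J" "p J \<le> T1 + 1" "\<And>j s. j < J \<Longrightarrow> s \<in> {p j<..p (Suc j)} \<Longrightarrow> \<bar>F s - F (p j)\<bar> \<le> \<epsilon>"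
    using fine_continuity_point_partition[OF F_cont T1 \<epsilon>(1)] by blast
  have "J > 0" using p(2,4) T1 by (cases J) auto
  define \<phi> where "\<phi> s = (\<Sum>j<J. F (p j) * indicator {p j<..p (Suc j)} s)" for s
  have approx: "\<bar>F s - \<phi> s\<bar> \<le> \<epsilon> * indicator {..p J} s + \<bar>F 0\<bar> * indicator {..p 0} s" for s
    unfolding \<phi>_def by (rule step_function_approx[OF p(1,2,4) F_zero F_const p(6) less_imp_le[OF \<epsilon>(1)]])
  have "\<bar>F (T n i) - \<phi> (T n i)\<bar> \<le> \<epsilon> * indicator {..p J} (T n i)" if "i < K n" for n i
    using approx[of "T n i"] T0[OF that] p(2) by simp
  then have sum_err: "\<bar>(\<Sum>i<K n. a n i * F (T n i)) - (\<Sum>i<K n. a n i * \<phi> (T n i))\<bar>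
      \<le> \<epsilon> * (\<Sum>i<K n. a n i * indicator {..p J} (T n i))" for n
    by (intro abs_weighted_sum_diff_le a0)
  have "(\<lambda>n. \<Sum>i<K n. a n i * indicator {..p J} (T n i)) \<longlonglongrightarrow> H (p J)"
    using p(3)[OF \<open>J > 0\<close>] by (intro conv) auto
  then have "\<forall>\<^sub>F n in sequentially. (\<Sum>i<K n. a n i * indicator {..p J} (T n i)) < H (T1 + 1) + 1"
    using H_le[OF p(5)] by (intro order_tendstoD(2)) auto
  then have "\<forall>\<^sub>F n in sequentially. \<bar>(\<Sum>i<K n. a n i * F (T n i)) - (\<Sum>i<K n. a n i * \<phi> (T n i))\<bar> \<le> e"
    by eventually_elim (use sum_err \<epsilon> in \<open>smt (verit) mult_left_mono\<close>)
  moreover have "(\<lambda>n. \<Sum>i<K n. a n i * \<phi> (T n i)) \<longlonglongrightarrow> integral\<^sup>L \<mu> \<phi>"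
    unfolding \<phi>_def integral_step_function[OF strict_mono_mono[OF p(1)]]
    by (intro tendsto_weighted_sum_step_function T0 conv strict_mono_mono[OF p(1)] p(2,3))
  moreover have "\<bar>integral\<^sup>L \<mu> \<phi> - integral\<^sup>L \<mu> F\<bar> \<le> \<epsilon> * H (p J)"
  proof (rule abs_integral_diff_le[OF _ _ p(2) approx])
    show "integrable \<mu> F" by (rule integrable_eventually_zero[OF F_cont T1 F_zero F_const])
    show "integrable \<mu> \<phi>" unfolding \<phi>_def
      by (intro Bochner_Integration.integrable_sum integrable_mult_right integrable_real_indicator)
         (auto simp: emeasure_mu_Ioc_finite)
  qed
  then have "\<bar>integral\<^sup>L \<mu> \<phi> - integral\<^sup>L \<mu> F\<bar> \<le> e"
    using \<epsilon> H_le[OF p(5)] H_nonneg[of "T1 + 1"] by (smt (verit) mult_left_mono)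
  ultimately show ?thesis by blast
qed

lemma tendsto_weighted_sum_integral:
  fixes a T :: "nat \<Rightarrow> nat \<Rightarrow> real" and K :: "nat \<Rightarrow> nat" and f :: "real \<Rightarrow> real"
  assumes a0: "\<And>n i. a n i \<ge> 0" and T0: "\<And>n i. i < K n \<Longrightarrow> T n i \<ge> 0"
    and conv: "\<And>s. s > 0 \<Longrightarrow> isCont H s \<Longrightarrow> (\<lambda>n. \<Sum>i<K n. a n i * indicator {..s} (T n i)) \<longlonglongrightarrow> H s"
    and f: "continuous_on {0..} f" and f_zero: "\<And>s. s \<ge> Tf \<Longrightarrow> f s = 0"
  shows "(\<lambda>n. \<Sum>i<K n. a n i * f (T n i)) \<longlonglongrightarrow> integral\<^sup>L \<mu> (\<lambda>s. f (max 0 s))"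
proof -
  have "continuous_on UNIV (\<lambda>s. f (max 0 s))"
    by (rule continuous_on_compose2[OF f]) (auto intro!: continuous_intros)
  then have "(\<lambda>n. \<Sum>i<K n. a n i * f (max 0 (T n i))) \<longlonglongrightarrow> integral\<^sup>L \<mu> (\<lambda>s. f (max 0 s))"
    using f_zero
    by (intro tendsto_if_approximable weighted_sum_approximable[OF a0 T0 conv, of _ "max Tf 0"]) auto
  moreover have "(\<Sum>i<K n. a n i * f (T n i)) = (\<Sum>i<K n. a n i * f (max 0 (T n i)))" for n
    using T0 by (intro sum.cong) auto
  ultimately show ?thesis by simp
qed

end

section \<open>Recovering the distribution function from ramp sums\<close>

definition ramp :: "real \<Rightarrow> nat \<Rightarrow> real \<Rightarrow> real" where
  "ramp q m s = max 0 (min 1 (1 - real (Suc m) * (s - q)))"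

lemma ramp_bounds: "0 \<le> ramp q m s" "ramp q m s \<le> 1"
  by (auto simp: ramp_def)

lemma ramp_eq_1: "s \<le> q \<Longrightarrow> ramp q m s = 1"
  by (simp add: ramp_def mult_nonneg_nonpos)

lemma ramp_eq_0:
  assumes "s \<ge> q + 1 / real (Suc m)" shows "ramp q m s = 0"
proof -
  have "real (Suc m) * (s - q) \<ge> real (Suc m) * (1 / real (Suc m))"
    using assms by (intro mult_left_mono) auto
  then show ?thesis by (simp add: ramp_def)
qed

lemma indicator_atMost_le_ramp: "s < q \<Longrightarrow> indicator {..s} v \<le> ramp q m v"
  using ramp_bounds[of q m v] ramp_eq_1[of v q m] by (auto simp: indicator_def)

lemma ramp_le_indicator_atMost: "q + 1 / real (Suc m) \<le> s \<Longrightarrow> ramp q m v \<le> indicator {..s} v"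
  using ramp_bounds[of q m v] ramp_eq_0[of q m v] by (auto simp: indicator_def)

lemma continuous_on_ramp: "continuous_on A (ramp q m)"
  unfolding ramp_def by (intro continuous_intros)

text \<open>\<open>qv_sum t k f x n\<close> is the integral of \<open>f\<close> against the measure \<open>\<mu>\<^sub>n\<close> of the statement.\<close>

definition qv_sum :: "(nat \<Rightarrow> nat \<Rightarrow> real) \<Rightarrow> (nat \<Rightarrow> nat) \<Rightarrow> (real \<Rightarrow> real) \<Rightarrow> (real \<Rightarrow> real) \<Rightarrow> nat \<Rightarrow> real"
  where "qv_sum t k f x n = (\<Sum>i<k n. (x (t n (Suc i)) - x (t n i))\<^sup>2 * f (t n i))"

lemma qv_sum_mono:
  assumes "\<And>i. i < k n \<Longrightarrow> t n i \<ge> 0" and "\<And>s. s \<ge> 0 \<Longrightarrow> f s \<le> g s"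
  shows "qv_sum t k f x n \<le> qv_sum t k g x n"
  unfolding qv_sum_def using assms by (intro sum_mono mult_left_mono) auto

lemma qv_sum_nonneg: "(\<And>s. f s \<ge> 0) \<Longrightarrow> qv_sum t k f x n \<ge> 0"
  unfolding qv_sum_def by (intro sum_nonneg) auto

text \<open>
  For \<open>x \<in> Q\<^sub>0\<^sup>\<pi>\<close> the limits \<open>ramp_lim\<close> exist and \<open>qv_cdf t k x s = \<mu>([0, s])\<close> for \<open>s \<ge> 0\<close>;
  \<open>lim\<close> returns junk when a limit does not exist, which \<open>ramp_sums_converge\<close> rules out.
\<close>

definition ramp_lim :: "(nat \<Rightarrow> nat \<Rightarrow> real) \<Rightarrow> (nat \<Rightarrow> nat) \<Rightarrow> real \<Rightarrow> nat \<Rightarrow> (real \<Rightarrow> real) \<Rightarrow> real"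
  where "ramp_lim t k q m x = lim (\<lambda>n. qv_sum t k (ramp q m) x n)"

definition ramp_inf :: "(nat \<Rightarrow> nat \<Rightarrow> real) \<Rightarrow> (nat \<Rightarrow> nat) \<Rightarrow> real \<Rightarrow> (real \<Rightarrow> real) \<Rightarrow> real"
  where "ramp_inf t k q x = (INF m. ramp_lim t k q m x)"

definition qv_cdf :: "(nat \<Rightarrow> nat \<Rightarrow> real) \<Rightarrow> (nat \<Rightarrow> nat) \<Rightarrow> (real \<Rightarrow> real) \<Rightarrow> real \<Rightarrow> real"
  where "qv_cdf t k x s = (if s < 0 then 0 else (INF q\<in>{q\<in>\<rat>. s < q}. ramp_inf t k q x))"

definition ramp_sums_converge :: "(nat \<Rightarrow> nat \<Rightarrow> real) \<Rightarrow> (nat \<Rightarrow> nat) \<Rightarrow> (real \<Rightarrow> real) \<Rightarrow> bool"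
  where "ramp_sums_converge t k x \<longleftrightarrow> (\<forall>q\<in>\<rat>. \<forall>m. convergent (\<lambda>n. qv_sum t k (ramp q m) x n))"

lemma qv_cdf_neg: "s < 0 \<Longrightarrow> qv_cdf t k x s = 0"
  by (simp add: qv_cdf_def)

locale ramp_convergent =
  fixes t :: "nat \<Rightarrow> nat \<Rightarrow> real" and k :: "nat \<Rightarrow> nat" and x :: "real \<Rightarrow> real"
  assumes t_nonneg: "\<And>n i. i < k n \<Longrightarrow> t n i \<ge> 0" and converge: "ramp_sums_converge t k x"
begin

abbreviation "H\<^sub>x \<equiv> qv_cdf t k x"

lemma tendsto_ramp_lim: "q \<in> \<rat> \<Longrightarrow> (\<lambda>n. qv_sum t k (ramp q m) x n) \<longlonglongrightarrow> ramp_lim t k q m x"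
  using converge unfolding ramp_sums_converge_def ramp_lim_def by (auto simp: convergent_LIMSEQ_iff)

lemma ramp_lim_nonneg: "q \<in> \<rat> \<Longrightarrow> ramp_lim t k q m x \<ge> 0"
  by (rule LIMSEQ_le_const[OF tendsto_ramp_lim]) (auto intro: qv_sum_nonneg ramp_bounds)

lemma bdd_below_ramp_lim: "q \<in> \<rat> \<Longrightarrow> bdd_below (range (\<lambda>m. ramp_lim t k q m x))"
  by (rule bdd_belowI2[of _ 0]) (auto intro: ramp_lim_nonneg)

lemma ramp_inf_nonneg: "q \<in> \<rat> \<Longrightarrow> ramp_inf t k q x \<ge> 0"
  unfolding ramp_inf_def by (rule cINF_greatest) (auto intro: ramp_lim_nonneg)

lemma ramp_inf_le: "q \<in> \<rat> \<Longrightarrow> ramp_inf t k q x \<le> ramp_lim t k q m x"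
  unfolding ramp_inf_def by (rule cINF_lower[OF bdd_below_ramp_lim]) auto

lemma bdd_below_ramp_inf: "bdd_below ((\<lambda>q. ramp_inf t k q x) ` {q\<in>\<rat>. s < q})"
  by (rule bdd_belowI2[of _ 0]) (auto intro: ramp_inf_nonneg)

lemma qv_cdf_nonneg: "H\<^sub>x s \<ge> 0"
  unfolding qv_cdf_def using Rats_greaterThan_nonempty
  by (auto intro!: cINF_greatest ramp_inf_nonneg)

lemma qv_cdf_le_ramp_inf: "0 \<le> s \<Longrightarrow> s < q \<Longrightarrow> q \<in> \<rat> \<Longrightarrow> H\<^sub>x s \<le> ramp_inf t k q x"
  unfolding qv_cdf_def by (auto intro!: cINF_lower[OF bdd_below_ramp_inf])

lemma qv_cdf_approx:
  assumes "0 \<le> s" "e > 0"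
  obtains q where "q \<in> \<rat>" "s < q" "ramp_inf t k q x < H\<^sub>x s + e"
proof -
  have "(INF q\<in>{q\<in>\<rat>. s < q}. ramp_inf t k q x) < H\<^sub>x s + e" using assms by (simp add: qv_cdf_def)
  then show ?thesis
    using cINF_less_iff[OF Rats_greaterThan_nonempty bdd_below_ramp_inf] that by auto
qed

lemma mono_qv_cdf: "mono H\<^sub>x"
proof (rule monoI)
  fix s s' :: real assume "s \<le> s'"
  show "H\<^sub>x s \<le> H\<^sub>x s'"
  proof (cases "s < 0")
    case True
    then show ?thesis using qv_cdf_nonneg by (simp add: qv_cdf_neg)
  next
    case False
    then show ?thesis unfolding qv_cdf_def using \<open>s \<le> s'\<close>
      by (simp, intro cINF_superset_mono[OF Rats_greaterThan_nonempty bdd_below_ramp_inf]) auto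
  qed
qed

lemma qv_cdf_right_cont: "continuous (at_right s) H\<^sub>x"
proof (rule right_cont_if_mono[OF mono_qv_cdf])
  fix e assume e: "H\<^sub>x s < e"
  show "\<exists>b>s. H\<^sub>x b < e"
  proof (cases "s < 0")
    case True
    then show ?thesis using e by (intro exI[of _ "s / 2"]) (simp add: qv_cdf_neg)
  next
    case False
    then obtain q where q: "q \<in> \<rat>" "s < q" "ramp_inf t k q x < e"
      using qv_cdf_approx[of s "e - H\<^sub>x s"] e by auto
    then have "H\<^sub>x ((s + q) / 2) \<le> ramp_inf t k q x" using False by (intro qv_cdf_le_ramp_inf) auto
    then show ?thesis using q by (intro exI[of _ "(s + q) / 2"]) auto
  qed
qed

sublocale distribution_function H\<^sub>x
  by unfold_locales (auto intro: mono_qv_cdf qv_cdf_right_cont qv_cdf_neg)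

lemma eventually_qv_sum_indicator_less:
  assumes "s \<ge> 0" "H\<^sub>x s < e"
  shows "\<forall>\<^sub>F n in sequentially. qv_sum t k (indicator {..s}) x n < e"
proof -
  obtain q where q: "q \<in> \<rat>" "s < q" "ramp_inf t k q x < e"
    using qv_cdf_approx[of s "e - H\<^sub>x s"] assms by auto
  then obtain m where m: "ramp_lim t k q m x < e"
    using cINF_less_iff[OF UNIV_not_empty bdd_below_ramp_lim] by (auto simp: ramp_inf_def)
  have le: "qv_sum t k (indicator {..s}) x n \<le> qv_sum t k (ramp q m) x n" for n
    using q(2) by (intro qv_sum_mono t_nonneg indicator_atMost_le_ramp)
  from order_tendstoD(2)[OF tendsto_ramp_lim[OF q(1)] \<open>ramp_lim t k q m x < e\<close>]
  show ?thesis by eventually_elim (rule le_less_trans[OF le])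
qed

lemma eventually_qv_sum_indicator_greater:
  assumes s: "s > 0" "isCont H\<^sub>x s" and e: "e < H\<^sub>x s"
  shows "\<forall>\<^sub>F n in sequentially. e < qv_sum t k (indicator {..s}) x n"
proof -
  have "(H\<^sub>x \<longlongrightarrow> H\<^sub>x s) (at_left s)" using s by (simp add: isCont_def filterlim_at_split)
  then have "\<forall>\<^sub>F v in at_left s. e < H\<^sub>x v \<and> 0 < v"
    using e s by (intro eventually_conj order_tendstoD(1)) (auto simp: eventually_at_left_field)
  then obtain b where b: "b < s" "\<And>v. b < v \<Longrightarrow> v < s \<Longrightarrow> e < H\<^sub>x v \<and> 0 < v"
    by (auto simp: eventually_at_left_field)
  define v where "v = (b + s) / 2"
  have "b < v" "v < s" using b(1) by (simp_all add: v_def)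
  then have v: "e < H\<^sub>x v" "0 < v" "v < s" using b(2) by auto
  obtain r where r: "r \<in> \<rat>" "v < r" "r < s" using Rats_dense_in_real[OF v(3)] by auto
  obtain m where m: "1 / real (Suc m) < s - r" using nat_approx_posE[of "s - r"] r by auto
  have "e < ramp_lim t k r m x"
    using v r qv_cdf_le_ramp_inf[of v r] ramp_inf_le[of r m] by linarith
  have le: "qv_sum t k (ramp r m) x n \<le> qv_sum t k (indicator {..s}) x n" for n
    using m by (intro qv_sum_mono t_nonneg ramp_le_indicator_atMost) simp_all
  from order_tendstoD(1)[OF tendsto_ramp_lim[OF r(1)] \<open>e < ramp_lim t k r m x\<close>]
  show ?thesis by eventually_elim (rule less_le_trans[OF _ le])
qed

lemma tendsto_qv_sum_indicator:
  assumes "s > 0" "isCont H\<^sub>x s"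
  shows "(\<lambda>n. qv_sum t k (indicator {..s}) x n) \<longlonglongrightarrow> H\<^sub>x s"
  using assms by (intro order_tendstoI eventually_qv_sum_indicator_less eventually_qv_sum_indicator_greater) auto

end

section \<open>The distribution function of a measure without mass on \<open>(-\<infinity>, 0)\<close>\<close>

locale halfline_measure =
  fixes \<nu> :: "real measure"
  assumes sets_nu: "sets \<nu> = sets borel" and nu_neg: "emeasure \<nu> {..<0} = 0"
    and nu_finite: "\<And>T. emeasure \<nu> {0..T} < \<infinity>"
begin

definition nu_cdf :: "real \<Rightarrow> real" where
  "nu_cdf s = measure \<nu> {..s}"

lemma space_nu: "space \<nu> = UNIV"
  using sets_eq_imp_space_eq[OF sets_nu] by simp

lemma emeasure_atMost_eq_Icc_0: "emeasure \<nu> {..s} = emeasure \<nu> {0..s}"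
proof (cases "s < 0")
  case True
  then have "emeasure \<nu> {..s} \<le> emeasure \<nu> {..<0}" by (intro emeasure_mono) (auto simp: sets_nu)
  then show ?thesis using True nu_neg by simp
next
  case False
  have "emeasure \<nu> {..<0} + emeasure \<nu> {0..s} = emeasure \<nu> ({..<0} \<union> {0..s})"
    by (rule plus_emeasure) (auto simp: sets_nu)
  moreover have "{..<0} \<union> {0..s} = {..s}" using False by auto
  ultimately show ?thesis using nu_neg by simp
qed

lemma emeasure_atMost_finite: "emeasure \<nu> {..s} < top"
  using nu_finite[of s] by (simp add: emeasure_atMost_eq_Icc_0)

lemma nu_cdf_eq_Icc_0: "nu_cdf s = measure \<nu> {0..s}"
  unfolding nu_cdf_def measure_def by (simp add: emeasure_atMost_eq_Icc_0)

lemma nu_cdf_neg: "s < 0 \<Longrightarrow> nu_cdf s = 0"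
  by (simp add: nu_cdf_eq_Icc_0)

lemma mono_nu_cdf: "mono nu_cdf"
proof (rule monoI)
  fix s s' :: real assume "s \<le> s'"
  then show "nu_cdf s \<le> nu_cdf s'"
    unfolding nu_cdf_def using emeasure_atMost_finite[of s']
    by (intro measure_mono_fmeasurable) (auto simp: sets_nu fmeasurable_def)
qed

lemma nu_cdf_right_cont: "continuous (at_right s) nu_cdf"
proof (rule right_cont_if_mono[OF mono_nu_cdf])
  have "(\<lambda>n. emeasure \<nu> {..s + 1 / real (Suc n)}) \<longlonglongrightarrow> emeasure \<nu> (\<Inter>n. {..s + 1 / real (Suc n)})"
    by (intro Lim_emeasure_decseq decseq_SucI)
       (auto simp: sets_nu emeasure_atMost_finite[unfolded less_top[symmetric]] frac_le intro: order_trans)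
  moreover have "(\<Inter>n. {..s + 1 / real (Suc n)}) = {..s}"
  proof (intro equalityI subsetI)
    fix v assume v: "v \<in> (\<Inter>n. {..s + 1 / real (Suc n)})"
    show "v \<in> {..s}"
    proof (rule ccontr)
      assume "v \<notin> {..s}"
      then obtain n where "1 / real (Suc n) < v - s" using nat_approx_posE[of "v - s"] by auto
      moreover have "v \<le> s + 1 / real (Suc n)" using v by blast
      ultimately show False by simp
    qed
  qed (auto intro: order_trans)
  moreover have "emeasure \<nu> {..v} = ennreal (nu_cdf v)" for v
    unfolding nu_cdf_def using emeasure_atMost_finite[of v] by (intro emeasure_eq_ennreal_measure) simp
  ultimately have lim: "(\<lambda>n. nu_cdf (s + 1 / real (Suc n))) \<longlonglongrightarrow> nu_cdf s"
    by (intro tendsto_ennrealD) (auto simp: nu_cdf_def)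
  fix e assume "nu_cdf s < e"
  from order_tendstoD(2)[OF lim this] obtain N where "nu_cdf (s + 1 / real (Suc N)) < e"
    by (auto simp: eventually_sequentially)
  then show "\<exists>b>s. nu_cdf b < e" by (intro exI[of _ "s + 1 / real (Suc N)"]) simp
qed

lemma integrable_indicator_atMost: "integrable \<nu> (indicator {..s} :: real \<Rightarrow> real)"
  by (intro integrable_real_indicator) (auto simp: sets_nu emeasure_atMost_finite)

lemma integral_indicator_atMost: "integral\<^sup>L \<nu> (indicator {..s}) = nu_cdf s"
  by (simp add: nu_cdf_def space_nu)

lemma integrable_ramp: "integrable \<nu> (\<lambda>s. ramp q m (max 0 s))"
proof (rule Bochner_Integration.integrable_bound[OF integrable_indicator_atMost])
  show "(\<lambda>s. ramp q m (max 0 s)) \<in> borel_measurable \<nu>"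
    unfolding measurable_cong_sets[OF sets_nu refl] ramp_def
    by (intro borel_measurable_continuous_onI continuous_intros)
  have "\<bar>ramp q m (max 0 s)\<bar> \<le> indicator {..q + 1} s" for s
  proof (cases "s \<le> q + 1")
    case False
    moreover have "1 / real (Suc m) \<le> 1" by simp
    ultimately have "q + 1 / real (Suc m) \<le> max 0 s" by linarith
    then show ?thesis using ramp_eq_0 False by simp
  qed (use ramp_bounds[of q m "max 0 s"] in simp)
  then show "AE s in \<nu>. norm (ramp q m (max 0 s)) \<le> norm (indicator {..q + 1} s :: real)"
    by (intro AE_I2) simp
qed

lemma integral_ramp_lower:
  assumes "0 \<le> q" shows "nu_cdf q \<le> integral\<^sup>L \<nu> (\<lambda>s. ramp q m (max 0 s))"
proof -
  have "indicator {..q} s \<le> ramp q m (max 0 s)" for s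
    using assms ramp_eq_1[of "max 0 s" q m] ramp_bounds[of q m "max 0 s"] by (cases "s \<le> q") auto
  then show ?thesis unfolding integral_indicator_atMost[symmetric]
    by (intro integral_mono integrable_indicator_atMost integrable_ramp)
qed

lemma integral_ramp_upper: "integral\<^sup>L \<nu> (\<lambda>s. ramp q m (max 0 s)) \<le> nu_cdf (q + 1 / real (Suc m))"
proof -
  have "ramp q m (max 0 s) \<le> indicator {..q + 1 / real (Suc m)} s" for s
    using ramp_eq_0[of q m "max 0 s"] ramp_bounds[of q m "max 0 s"]
    by (cases "s \<le> q + 1 / real (Suc m)") auto
  then show ?thesis unfolding integral_indicator_atMost[symmetric]
    by (intro integral_mono integrable_indicator_atMost integrable_ramp)
qed

lemma INF_integral_ramp:
  assumes q: "q \<ge> 0"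
  shows "(INF m. integral\<^sup>L \<nu> (\<lambda>s. ramp q m (max 0 s))) = nu_cdf q"
proof (rule antisym)
  show "nu_cdf q \<le> (INF m. integral\<^sup>L \<nu> (\<lambda>s. ramp q m (max 0 s)))"
    using integral_ramp_lower[OF q] by (intro cINF_greatest) auto
  show "(INF m. integral\<^sup>L \<nu> (\<lambda>s. ramp q m (max 0 s))) \<le> nu_cdf q"
  proof (rule field_le_epsilon)
    fix e :: real assume "e > 0"
    have "\<forall>\<^sub>F v in at_right q. nu_cdf v < nu_cdf q + e"
      using nu_cdf_right_cont[of q] \<open>e > 0\<close> by (intro order_tendstoD) (auto simp: continuous_within)
    then obtain b where b: "q < b" "\<And>v. q < v \<Longrightarrow> v < b \<Longrightarrow> nu_cdf v < nu_cdf q + e"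
      by (auto simp: eventually_at_right_field)
    obtain N where "1 / real (Suc N) < b - q" using nat_approx_posE[of "b - q"] b(1) by auto
    then have N: "nu_cdf (q + 1 / real (Suc N)) < nu_cdf q + e" using b(2) by simp
    have "(INF m. integral\<^sup>L \<nu> (\<lambda>s. ramp q m (max 0 s))) \<le> integral\<^sup>L \<nu> (\<lambda>s. ramp q N (max 0 s))"
      by (rule cINF_lower[OF bdd_belowI2[of _ "nu_cdf q"]]) (use integral_ramp_lower[OF q] in auto)
    also have "\<dots> \<le> nu_cdf (q + 1 / real (Suc N))" by (rule integral_ramp_upper)
    finally show "(INF m. integral\<^sup>L \<nu> (\<lambda>s. ramp q m (max 0 s))) \<le> nu_cdf q + e" using N by simp
  qed
qed

lemma qv_cdf_eq_nu_cdf: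
  assumes lim: "\<And>q m. (\<lambda>n. qv_sum t k (ramp q m) x n) \<longlonglongrightarrow> integral\<^sup>L \<nu> (\<lambda>s. ramp q m (max 0 s))"
  shows "qv_cdf t k x = nu_cdf"
proof
  fix s :: real
  have "ramp_inf t k q x = nu_cdf q" if "q \<ge> 0" for q
    unfolding ramp_inf_def ramp_lim_def limI[OF lim] using INF_integral_ramp[OF that] .
  then have "qv_cdf t k x s = (INF q\<in>{q\<in>\<rat>. s < q}. nu_cdf q)" if "s \<ge> 0"
    unfolding qv_cdf_def using that by (auto intro!: INF_cong)
  then show "qv_cdf t k x s = nu_cdf s"
    using INF_Rats_greaterThan_eq[OF mono_nu_cdf nu_cdf_right_cont]
    by (cases "s < 0") (auto simp: qv_cdf_neg nu_cdf_neg)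
qed

end

section \<open>A countable characterisation of \<open>Q\<^sub>0\<^sup>\<pi>\<close>\<close>

definition Q0_char :: "(nat \<Rightarrow> nat \<Rightarrow> real) \<Rightarrow> (nat \<Rightarrow> nat) \<Rightarrow> (real \<Rightarrow> real) set" where
  "Q0_char t k = {x\<in>cadlag. ramp_sums_converge t k x \<and> square_increments_match (qv_cdf t k x) x}"

lemma partition_seq_nonneg:
  assumes P: "partition_seq t k"
  shows "i < k n \<Longrightarrow> t n i \<ge> 0"
proof (induction i)
  case (Suc i)
  then have "t n i \<ge> 0" "t n i < t n (Suc i)" using P by (auto simp: partition_seq_def)
  then show ?case by simp
qed (use P in \<open>simp add: partition_seq_def\<close>)

lemma Q0_char_subset_Q0:
  assumes P: "partition_seq t k" and x_in: "x \<in> Q0_char t k"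
  shows "x \<in> Q0 t k"
proof -
  have x: "x \<in> cadlag" and converge: "ramp_sums_converge t k x"
    and match: "square_increments_match (qv_cdf t k x) x"
    using x_in by (auto simp: Q0_char_def)
  interpret ramp_convergent t k x using partition_seq_nonneg[OF P] converge by unfold_locales
  have jump_eq: "H\<^sub>x u - left_lim H\<^sub>x u = (jump x u)\<^sup>2" if "u > 0" for u
    using jump_eq_if_square_increments_match[OF x mono_qv_cdf qv_cdf_right_cont match that] .
  interpret J: jump_function H\<^sub>x "\<lambda>u. (jump x u)\<^sup>2"
    using mono_qv_cdf qv_cdf_right_cont jump_eq by unfold_locales (auto simp: jump_def)
  have eq: "measure \<mu> {0..s} - (\<Sum>\<^sub>\<infinity>u\<in>{0..s}. (jump x u)\<^sup>2) = J.remainder s" if "s \<in> {0..}" for s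
    using that by (simp add: measure_mu_Icc_0 J.remainder_def)
  have "continuous_on {0..} (\<lambda>s. measure \<mu> {0..s} - (\<Sum>\<^sub>\<infinity>u\<in>{0..s}. (jump x u)\<^sup>2))
      \<longleftrightarrow> continuous_on {0..} J.remainder"
    using eq by (intro continuous_on_cong) auto
  then have "continuous_on {0..} (\<lambda>s. measure \<mu> {0..s} - (\<Sum>\<^sub>\<infinity>u\<in>{0..s}. (jump x u)\<^sup>2))"
    using J.continuous_on_remainder by simp
  moreover have "mono_on {0..} (\<lambda>s. measure \<mu> {0..s} - (\<Sum>\<^sub>\<infinity>u\<in>{0..s}. (jump x u)\<^sup>2))"
    using J.mono_on_remainder eq by (simp add: mono_on_def)
  moreover have "(\<lambda>n. \<Sum>i<k n. (x (t n (Suc i)) - x (t n i))\<^sup>2 * f (t n i)) \<longlonglongrightarrow> integral\<^sup>L \<mu> (\<lambda>s. f (max 0 s))"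
    if f: "continuous_on {0..} f \<and> (\<exists>T. \<forall>s\<ge>T. f s = 0)" for f
  proof -
    obtain T where "continuous_on {0..} f" "\<And>s. s \<ge> T \<Longrightarrow> f s = 0" using f by blast
    moreover have "(\<lambda>n. \<Sum>i<k n. (x (t n (Suc i)) - x (t n i))\<^sup>2 * indicator {..s} (t n i)) \<longlonglongrightarrow> H\<^sub>x s"
      if "s > 0" "isCont H\<^sub>x s" for s
      using tendsto_qv_sum_indicator[OF that] unfolding qv_sum_def .
    ultimately show ?thesis by (intro tendsto_weighted_sum_integral[OF zero_le_power2 t_nonneg])
  qed
  ultimately show ?thesis
    unfolding Q0_def
  proof (intro CollectI conjI exI[of _ \<mu>] x)
    show "emeasure \<mu> {..<0} = 0" by (rule emeasure_mu_lessThan_0)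
    show "\<forall>T. emeasure \<mu> {0..T} < \<infinity>" using emeasure_mu_Icc_finite by blast
    show "\<forall>s\<ge>0. (\<lambda>u. (jump x u)\<^sup>2) summable_on {0..s}" using J.summable by blast
  qed auto
qed

lemma Q0_subset_Q0_char:
  assumes x_in: "x \<in> Q0 t k"
  shows "x \<in> Q0_char t k"
proof -
  obtain \<nu> where x: "x \<in> cadlag" and \<nu>: "sets \<nu> = sets borel" "emeasure \<nu> {..<0} = 0"
      "\<forall>T. emeasure \<nu> {0..T} < \<infinity>"
    and lim: "\<forall>f :: real \<Rightarrow> real. continuous_on {0..} f \<and> (\<exists>T. \<forall>s\<ge>T. f s = 0) \<longrightarrow>
         (\<lambda>n. \<Sum>i<k n. (x (t n (Suc i)) - x (t n i))\<^sup>2 * f (t n i)) \<longlonglongrightarrow> integral\<^sup>L \<nu> (\<lambda>s. f (max 0 s))"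
    and summable: "\<forall>s\<ge>0. (\<lambda>u. (jump x u)\<^sup>2) summable_on {0..s}"
    and cont: "continuous_on {0..} (\<lambda>s. measure \<nu> {0..s} - (\<Sum>\<^sub>\<infinity>u\<in>{0..s}. (jump x u)\<^sup>2))"
    using x_in unfolding Q0_def by blast
  interpret halfline_measure \<nu> using \<nu> by unfold_locales auto
  have ramp_lim: "(\<lambda>n. qv_sum t k (ramp q m) x n) \<longlonglongrightarrow> integral\<^sup>L \<nu> (\<lambda>s. ramp q m (max 0 s))" for q m
  proof -
    have "ramp q m s = 0" if "s \<ge> q + 1" for s
      using that by (intro ramp_eq_0) (simp add: order_trans[OF _ that])
    then have "continuous_on {0..} (ramp q m) \<and> (\<exists>T. \<forall>s\<ge>T. ramp q m s = 0)"
      using continuous_on_ramp by blast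
    then show ?thesis using lim[rule_format, of "ramp q m"] unfolding qv_sum_def by simp
  qed
  then have "ramp_sums_converge t k x" unfolding ramp_sums_converge_def convergent_def by blast
  moreover have "qv_cdf t k x = nu_cdf" using ramp_lim by (rule qv_cdf_eq_nu_cdf)
  moreover have "square_increments_match nu_cdf x"
  proof (rule square_increments_match_if_jump_eq[OF x mono_nu_cdf nu_cdf_right_cont])
    have cont': "continuous_on {0..} (\<lambda>s. nu_cdf s - (\<Sum>\<^sub>\<infinity>u\<in>{0..s}. (jump x u)\<^sup>2))"
      using cont by (simp add: nu_cdf_eq_Icc_0)
    show "nu_cdf u - left_lim nu_cdf u = (jump x u)\<^sup>2" if "u > 0" for u
      using jump_eq_if_remainder_continuous[OF mono_nu_cdf _ _ cont' that] summable by simp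
  qed
  ultimately show ?thesis using x by (simp add: Q0_char_def)
qed

lemma qv_sum_measurable[measurable]: "(\<lambda>x. qv_sum t k f x n) \<in> borel_measurable skorokhod_space"
  unfolding qv_sum_def by measurable

lemma ramp_lim_measurable[measurable]: "(\<lambda>x. ramp_lim t k q m x) \<in> borel_measurable skorokhod_space"
  unfolding ramp_lim_def by measurable

lemma ramp_inf_measurable[measurable]: "(\<lambda>x. ramp_inf t k q x) \<in> borel_measurable skorokhod_space"
  unfolding ramp_inf_def by (rule borel_measurable_cINF_real) auto

lemma qv_cdf_measurable[measurable]: "(\<lambda>x. qv_cdf t k x s) \<in> borel_measurable skorokhod_space"
proof (cases "s < 0")
  case True then show ?thesis by (simp add: qv_cdf_def)
next
  case False
  have "countable {q\<in>\<rat>. s < q}" by (rule countable_subset[OF _ countable_rat]) auto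
  then have "(\<lambda>x. INF q\<in>{q\<in>\<rat>. s < q}. ramp_inf t k q x) \<in> borel_measurable skorokhod_space"
    by (rule borel_measurable_cINF_real) auto
  then show ?thesis using False by (simp add: qv_cdf_def)
qed

lemma pred_ramp_sums_converge [measurable]:
  "Measurable.pred skorokhod_space (ramp_sums_converge t k)"
  unfolding ramp_sums_converge_def Cauchy_convergent_iff[symmetric] pred_def
  by (intro sets.sets_Collect_countable_All'[OF _ countable_rat] sets.sets_Collect_countable_All
      sets_Collect_Cauchy qv_sum_measurable)

lemma pred_square_increments_match_qv_cdf [measurable]:
  "Measurable.pred skorokhod_space (\<lambda>x. square_increments_match (qv_cdf t k x) x)"
  unfolding square_increments_match_def pred_def
  by (intro sets.sets_Collect_countable_All sets.sets_Collect_countable_Ex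
      sets.sets_Collect_countable_All'[OF _ countable_rat] sets.sets_Collect_imp sets.sets_Collect_const)
     measurable

lemma Q0_char_in_sets: "Q0_char t k \<in> sets skorokhod_space"
proof -
  have "Q0_char t k = {x\<in>space skorokhod_space.
      ramp_sums_converge t k x \<and> square_increments_match (qv_cdf t k x) x}"
    by (auto simp: Q0_char_def space_skorokhod_space)
  also have "\<dots> \<in> sets skorokhod_space" by measurable
  finally show ?thesis .
qed

theorem mainTheorem15:
  fixes t :: "nat \<Rightarrow> nat \<Rightarrow> real" and k :: "nat \<Rightarrow> nat"
  assumes "partition_seq t k"
  shows "Q0 t k \<in> skorokhod_borel"
proof -
  have "Q0 t k = Q0_char t k"
    using Q0_char_subset_Q0[OF assms] Q0_subset_Q0_char by blast
  then show ?thesis using Q0_char_in_sets sets_skorokhod_space by simp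
qed

end
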